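(* Let $\kappa,w>0$ and $c\in\mathbb{R}\setminus\{0\}$, and let $L(\kappa,w,c):\mathcal{D}\to\mathcal{X}$ be the operator of the context. Then \[ \sigma(L(\kappa,w,c))=\{z\in\mathbb{C}:\det M(z;\kappa,w,c)=0\},\qquad \det M(z;\kappa,w,c)=c^4z^4+c^2(1+\kappa)(1+w)z^2+2\kappa w(1-\cosh(2z)). \] Suppose moreover $|c|>1$. Then: (i) the spectrum consists entirely of eigenvalues; (ii) each eigenvalue is an isolated point of the spectrum, and its algebraic multiplicity equals its multiplicity as a zero of the entire function $z\mapsto\det M(z;\kappa,w,c)$; (iii) each eigenvalue is geometrically simple; (iv) if $z\in\sigma(L(\kappa,w,c))$ then $\overline z\in\sigma(L(\kappa,w,c))$ and $-z\in\sigma(L(\kappa,w,c))$; (v) for $z\in\rho(L(\kappa,w,c))$ and $U=(p_1,p_2,\xi_1,\xi_2,P_1,P_2)\in\mathcal{X}$, writing $R(z)U=(zI-L(\kappa,w,c))^{-1}U$ and $d(z)=\det M(z;\kappa,w,c)$, \begin{align*} (R(z)U)_1&=\frac{c^2z^2+w(1+\kappa)}{d(z)}\big(c^2\xi_1+c^2zp_1+\mathcal{I}_z[P_2](1)+\kappa\mathcal{I}_z[P_2](-1)\big)\\&\quad+\frac{e^z+\kappa e^{-z}}{d(z)}\big(c^2\xi_2+c^2zp_2+\kappa w\mathcal{I}_z[P_1](1)+w\mathcal{I}_z[P_1](-1)\big),\\ (R(z)U)_2&=\frac{w(\kappa e^z+e^{-z})}{d(z)}\big(c^2\xi_1+c^2zp_1+\mathcal{I}_z[P_2](1)+\kappa\mathcal{I}_z[P_2](-1)\big)\\&\quad+\frac{c^2z^2+1+\kappa}{d(z)}\big(c^2\xi_2+c^2zp_2+\kappa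 w\mathcal{I}_z[P_1](1)+w\mathcal{I}_z[P_1](-1)\big),\\ (R(z)U)_3&=z(R(z)U)_1-p_1,\qquad (R(z)U)_4=z(R(z)U)_2-p_2,\\ (R(z)U)_5(v)&=e^{zv}(R(z)U)_1+\mathcal{I}_z[P_1](v),\qquad (R(z)U)_6(v)=e^{zv}(R(z)U)_2+\mathcal{I}_z[P_2](v),\quad -1\le v\le1, \end{align*} where $\mathcal{I}_z[P](v):=-\int_0^ve^{z(v-s)}P(s)\,ds$.
   Context: Let $\mathcal{X}=\{(p_1,p_2,\xi_1,\xi_2,P_1,P_2)\in\mathbb{R}^4\times C([-1,1])\times C([-1,1]):P_1(0)=p_1,\ P_2(0)=p_2\}$ with the maximum norm, and $\mathcal{D}=\mathcal{X}\cap(\mathbb{R}^4\times C^1([-1,1])\times C^1([-1,1]))$; spectral notions refer to the complexified spaces and operator, $L(\kappa,w,c)$ being regarded as an operator in $\mathcal{X}$ with domain $\mathcal{D}$; $(U)_k$ denotes the $k$th component of $U$. For $U=(p_1,p_2,\xi_1,\xi_2,P_1,P_2)\in\mathcal{D}$, \[ L(\kappa,w,c)U=\Big(\xi_1,\ \xi_2,\ c^{-2}\big[-(1+\kappa)p_1+P_2(1)+\kappa P_2(-1)\big],\ c^{-2}\big[-w(1+\kappa)p_2+w(\kappa P_1(1)+P_1(-1))\big],\ P_1',\ P_2'\Big). \] $M(z;\kappa,w,c)$ is the $2\times2$ matrix with rows $\big(c^2z^2+1+\kappa,\ -(e^z+\kappa e^{-z})\big)$ and $\big(-w(\kappa e^z+e^{-z}),\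 c^2z^2+w(1+\kappa)\big)$. *)

theory Defs
  imports "HOL-Complex_Analysis.Complex_Analysis"
begin

text \<open>Elements of the complexified state space: (p1,p2,xi1,xi2,P1,P2).
  The function components are only relevant on [-1,1]; elements of the
  space are normalised to vanish outside [-1,1].\<close>

record st =
  p1 :: complex
  p2 :: complex
  xi1 :: complex
  xi2 :: complex
  P1 :: "real \<Rightarrow> complex"
  P2 :: "real \<Rightarrow> complex"

definition Xsp :: "st set" where
  "Xsp = {U. continuous_on {-1..1} (P1 U) \<and> continuous_on {-1..1} (P2 U)
            \<and> P1 U 0 = p1 U \<and> P2 U 0 = p2 U
            \<and> (\<forall>v. v \<notin> {-1..1} \<longrightarrow> P1 U v = 0 \<and> P2 U v = 0)}"

definition C1_on :: "(real \<Rightarrow> complex) \<Rightarrow> bool" where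
  "C1_on P \<longleftrightarrow> (\<forall>v\<in>{-1..1}. P differentiable (at v within {-1..1}))
      \<and> continuous_on {-1..1} (\<lambda>v. vector_derivative P (at v within {-1..1}))"

definition Dsp :: "st set" where
  "Dsp = {U \<in> Xsp. C1_on (P1 U) \<and> C1_on (P2 U)}"

definition dI :: "(real \<Rightarrow> complex) \<Rightarrow> real \<Rightarrow> complex" where
  "dI P v = (if v \<in> {-1..1} then vector_derivative P (at v within {-1..1}) else 0)"

definition Lop :: "real \<Rightarrow> real \<Rightarrow> real \<Rightarrow> st \<Rightarrow> st" where
  "Lop \<kappa> w c U = \<lparr> p1 = xi1 U, p2 = xi2 U,
     xi1 = (- (1 + of_real \<kappa>) * p1 U + P2 U 1 + of_real \<kappa> * P2 U (-1)) / (of_real c)\<^sup>2,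
     xi2 = (- of_real w * (1 + of_real \<kappa>) * p2 U
            + of_real w * (of_real \<kappa> * P1 U 1 + P1 U (-1))) / (of_real c)\<^sup>2,
     P1 = dI (P1 U), P2 = dI (P2 U) \<rparr>"

definition stzero :: st where
  "stzero = \<lparr> p1 = 0, p2 = 0, xi1 = 0, xi2 = 0, P1 = (\<lambda>_. 0), P2 = (\<lambda>_. 0) \<rparr>"

definition stadd :: "st \<Rightarrow> st \<Rightarrow> st" where
  "stadd U V = \<lparr> p1 = p1 U + p1 V, p2 = p2 U + p2 V, xi1 = xi1 U + xi1 V,
     xi2 = xi2 U + xi2 V, P1 = (\<lambda>v. P1 U v + P1 V v), P2 = (\<lambda>v. P2 U v + P2 V v) \<rparr>"

definition stscale :: "complex \<Rightarrow> st \<Rightarrow> st" where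
  "stscale a U = \<lparr> p1 = a * p1 U, p2 = a * p2 U, xi1 = a * xi1 U,
     xi2 = a * xi2 U, P1 = (\<lambda>v. a * P1 U v), P2 = (\<lambda>v. a * P2 U v) \<rparr>"

definition zmL :: "complex \<Rightarrow> real \<Rightarrow> real \<Rightarrow> real \<Rightarrow> st \<Rightarrow> st" where
  "zmL z \<kappa> w c U = stadd (stscale z U) (stscale (-1) (Lop \<kappa> w c U))"

definition normX :: "st \<Rightarrow> real" where
  "normX U = Max {norm (p1 U), norm (p2 U), norm (xi1 U), norm (xi2 U),
                  Sup ((\<lambda>v. norm (P1 U v)) ` {-1..1}), Sup ((\<lambda>v. norm (P2 U v)) ` {-1..1})}"

definition resolvent_set :: "real \<Rightarrow> real \<Rightarrow> real \<Rightarrow> complex set" where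
  "resolvent_set \<kappa> w c = {z.
     (\<forall>f\<in>Xsp. \<exists>!U. U \<in> Dsp \<and> zmL z \<kappa> w c U = f)
     \<and> (\<exists>C. \<forall>U\<in>Dsp. zmL z \<kappa> w c U \<in> Xsp \<longrightarrow> normX U \<le> C * normX (zmL z \<kappa> w c U))}"

definition spectrum_L :: "real \<Rightarrow> real \<Rightarrow> real \<Rightarrow> complex set" where
  "spectrum_L \<kappa> w c = - resolvent_set \<kappa> w c"

definition eigenvalue_L :: "real \<Rightarrow> real \<Rightarrow> real \<Rightarrow> complex \<Rightarrow> bool" where
  "eigenvalue_L \<kappa> w c z \<longleftrightarrow> (\<exists>U\<in>Dsp. U \<noteq> stzero \<and> Lop \<kappa> w c U = stscale z U)"

text \<open>kerpow k = ker (zI - L)^k (as an operator with its natural iterated domain).\<close>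
primrec kerpow :: "real \<Rightarrow> real \<Rightarrow> real \<Rightarrow> complex \<Rightarrow> nat \<Rightarrow> st set" where
  "kerpow \<kappa> w c z 0 = {stzero}"
| "kerpow \<kappa> w c z (Suc k) = {U \<in> Dsp. zmL z \<kappa> w c U \<in> kerpow \<kappa> w c z k}"

definition gen_eigenspace :: "real \<Rightarrow> real \<Rightarrow> real \<Rightarrow> complex \<Rightarrow> st set" where
  "gen_eigenspace \<kappa> w c z = (\<Union>k. kerpow \<kappa> w c z k)"

definition lincomb :: "(nat \<Rightarrow> complex) \<Rightarrow> (nat \<Rightarrow> st) \<Rightarrow> nat \<Rightarrow> st" where
  "lincomb a b n = foldr (\<lambda>i U. stadd (stscale (a i) (b i)) U) [0..<n] stzero"

definition has_dim :: "st set \<Rightarrow> nat \<Rightarrow> bool" where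
  "has_dim S n \<longleftrightarrow> (\<exists>b. (\<forall>i<n. b i \<in> S)
      \<and> (\<forall>a. lincomb a b n = stzero \<longrightarrow> (\<forall>i<n. a i = 0))
      \<and> (\<forall>U\<in>S. \<exists>a. U = lincomb a b n))"

definition algebraic_multiplicity_is :: "real \<Rightarrow> real \<Rightarrow> real \<Rightarrow> complex \<Rightarrow> nat \<Rightarrow> bool" where
  "algebraic_multiplicity_is \<kappa> w c z n \<longleftrightarrow> has_dim (gen_eigenspace \<kappa> w c z) n"

definition geometrically_simple :: "real \<Rightarrow> real \<Rightarrow> real \<Rightarrow> complex \<Rightarrow> bool" where
  "geometrically_simple \<kappa> w c z \<longleftrightarrow> has_dim (kerpow \<kappa> w c z 1) 1"

definition Mmat :: "complex \<Rightarrow> real \<Rightarrow> real \<Rightarrow> real \<Rightarrow> complex^2^2" where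
  "Mmat z \<kappa> w c = vector [
     vector [(of_real c)\<^sup>2 * z\<^sup>2 + 1 + of_real \<kappa>, - (exp z + of_real \<kappa> * exp (- z))],
     vector [- (of_real w * (of_real \<kappa> * exp z + exp (- z))),
             (of_real c)\<^sup>2 * z\<^sup>2 + of_real w * (1 + of_real \<kappa>)]]"

definition detM :: "real \<Rightarrow> real \<Rightarrow> real \<Rightarrow> complex \<Rightarrow> complex" where
  "detM \<kappa> w c z = det (Mmat z \<kappa> w c)"

definition Iz :: "complex \<Rightarrow> (real \<Rightarrow> complex) \<Rightarrow> real \<Rightarrow> complex" where
  "Iz z P v = - (if 0 \<le> v then integral {0..v} (\<lambda>s. exp (z * of_real (v - s)) * P s)
                 else - integral {v..0} (\<lambda>s. exp (z * of_real (v - s)) * P s))"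

definition Res :: "real \<Rightarrow> real \<Rightarrow> real \<Rightarrow> complex \<Rightarrow> st \<Rightarrow> st" where
  "Res \<kappa> w c z U = (THE V. V \<in> Dsp \<and> zmL z \<kappa> w c V = U)"

end

theory Submission
  imports Defs
begin

text \<open>Solving \<open>(z - L) U = F\<close> componentwise by variation of constants leaves only the boundary
  terms of \<open>L\<close>, which reduce the problem to the \<open>2 \<times> 2\<close> system \<open>M(z) (p1 U, p2 U) = (A, B)\<close>.
  Hence \<open>z\<close> is in the resolvent set iff \<open>det M(z) \<noteq> 0\<close>, Cramer's rule gives the resolvent and
  its boundedness, and a kernel vector of a singular \<open>M(z)\<close> gives an eigenvector.

  For \<open>\<bar>c\<bar> > 1\<close> the matrix \<open>M(z)\<close> never vanishes, so at a zero \<open>z0\<close> of \<open>det M\<close> its kernel is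
  spanned by \<open>A(z0) = adj M(z0) e\<close>: the eigenvalue is geometrically simple. The Taylor
  coefficients at \<open>z0\<close> of the family of states built from \<open>A(\<lambda>)\<close> form a Jordan chain of length
  the order \<open>m\<close> of the zero; it cannot be prolonged because \<open>(z0 - L)\<close> would then have to hit a
  nonzero multiple of the state \<open>(0, 0, e1 / c\<^sup>2, e2 / c\<^sup>2, 0, 0)\<close>, which is not in its range. So the
  generalised eigenspace has dimension \<open>m\<close>.\<close>

section \<open>\<open>2 \<times> 2\<close> linear systems\<close>

lemma adjugate_2x2:
  fixes a b c d x y :: "'a::comm_ring"
  assumes "a * x + b * y = A" "c * x + d * y = B"
  shows "d * A - b * B = (a * d - b * c) * x" "a * B - c * A = (a * d - b * c) * y"
  unfolding assms[symmetric] by (simp_all add: algebra_simps)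

lemma cramer_2x2:
  fixes a b c d A B x y :: "'a::field"
  assumes "a * d - b * c \<noteq> 0"
  shows "a * x + b * y = A \<and> c * x + d * y = B \<longleftrightarrow>
    x = (d * A - b * B) / (a * d - b * c) \<and> y = (a * B - c * A) / (a * d - b * c)"
proof
  assume "a * x + b * y = A \<and> c * x + d * y = B"
  then have "d * A - b * B = x * (a * d - b * c)" "a * B - c * A = y * (a * d - b * c)"
    using adjugate_2x2[of a x b y A c d B] by (simp_all add: mult.commute)
  then show "x = (d * A - b * B) / (a * d - b * c) \<and> y = (a * B - c * A) / (a * d - b * c)"
    using assms by simp
next
  assume "x = (d * A - b * B) / (a * d - b * c) \<and> y = (a * B - c * A) / (a * d - b * c)"
  then have "x * (a * d - b * c) = d * A - b * B" "y * (a * d - b * c) = a * B - c * A"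
    using assms by simp_all
  then have "(a * x + b * y) * (a * d - b * c) = A * (a * d - b * c)"
    "(c * x + d * y) * (a * d - b * c) = B * (a * d - b * c)"
    by algebra+
  then show "a * x + b * y = A \<and> c * x + d * y = B"
    using assms by simp
qed

lemma singular_2x2_kernel:
  fixes a b c d :: "'a::field"
  assumes "a * d - b * c = 0"
  shows "\<exists>x y. (x \<noteq> 0 \<or> y \<noteq> 0) \<and> a * x + b * y = 0 \<and> c * x + d * y = 0"
proof -
  consider "d \<noteq> 0 \<or> c \<noteq> 0" | "b \<noteq> 0 \<or> a \<noteq> 0" | "a = 0 \<and> b = 0 \<and> c = 0 \<and> d = 0"
    by blast
  then show ?thesis
  proof cases
    case 1
    then show ?thesis
      using assms by (intro exI[of _ d] exI[of _ "-c"]) (auto simp: algebra_simps)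
  next
    case 2
    then show ?thesis
      using assms by (intro exI[of _ "-b"] exI[of _ a]) (auto simp: algebra_simps)
  next
    case 3
    then show ?thesis
      by (intro exI[of _ 1] exI[of _ 0]) simp
  qed
qed

lemma kernel_of_nonzero_row:
  fixes p q x y :: "'a::field"
  assumes "p \<noteq> 0 \<or> q \<noteq> 0" "p * x + q * y = 0"
  shows "\<exists>t. x = t * q \<and> y = - (t * p)"
proof (cases "q = 0")
  case True
  with assms show ?thesis
    by (intro exI[of _ "- y / p"]) simp
next
  case False
  with assms(2) show ?thesis
    by (intro exI[of _ "x / q"]) (simp add: field_simps eq_neg_iff_add_eq_0)
qed

section \<open>Calculus on [-1,1]\<close>

lemma dI_eqI:
  assumes "v \<in> {-1..1}" "(P has_vector_derivative D) (at v within {-1..1})"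
  shows "dI P v = D"
  using assms vector_derivative_within_closed_interval[of "-1" 1 v P D]
  unfolding dI_def by simp

lemma C1_on_has_vector_derivative:
  assumes "C1_on P" "v \<in> {-1..1}"
  shows "(P has_vector_derivative dI P v) (at v within {-1..1})"
  using assms unfolding C1_on_def dI_def
  by (auto intro!: vector_derivative_works[THEN iffD1])

lemma C1_on_continuous_dI:
  assumes "C1_on P"
  shows "continuous_on {-1..1} (dI P)"
proof -
  have "continuous_on {-1..1} (\<lambda>v. vector_derivative P (at v within {-1..1}))"
    using assms unfolding C1_on_def by auto
  then show ?thesis
    by (rule continuous_on_eq) (simp add: dI_def)
qed

lemma C1_onI:
  assumes "\<And>v. v \<in> {-1..1} \<Longrightarrow> (P has_vector_derivative D v) (at v within {-1..1})"
    and "continuous_on {-1..1} D"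
  shows "C1_on P"
  unfolding C1_on_def
proof
  show "\<forall>v\<in>{-1..1}. P differentiable at v within {-1..1}"
    using assms(1) unfolding differentiable_def has_vector_derivative_def by blast
  show "continuous_on {-1..1} (\<lambda>v. vector_derivative P (at v within {-1..1}))"
    using assms(2)
    by (rule continuous_on_eq) (use assms(1) vector_derivative_within_closed_interval[of "-1" 1] in force)
qed

lemma continuous_on_if_has_vector_derivative:
  assumes "\<And>v. v \<in> {-1..1} \<Longrightarrow> (P has_vector_derivative D v) (at v within {-1..1})"
  shows "continuous_on {-1..1} P"
  unfolding continuous_on_eq_continuous_within
  using assms has_vector_derivative_continuous by blast

lemma C1_on_continuous:
  assumes "C1_on P"
  shows "continuous_on {-1..1} P"
  using continuous_on_if_has_vector_derivative[OF C1_on_has_vector_derivative[OF assms]] .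

lemma has_vector_derivative_exp_real:
  fixes z :: complex
  shows "((\<lambda>s::real. exp (z * of_real s)) has_vector_derivative z * exp (z * of_real v)) (at v within S)"
proof -
  have "((\<lambda>x. exp (z * x)) has_field_derivative z * exp (z * of_real v)) (at (of_real v))"
    by (auto intro!: derivative_eq_intros)
  from has_vector_derivative_real_field[OF this] show ?thesis .
qed

lemma exp_real_diff:
  fixes z :: complex
  shows "exp (z * of_real (v - s)) = exp (z * of_real v) * exp (- (z * of_real s))"
  by (simp add: right_diff_distrib exp_diff exp_minus divide_inverse)

lemma integrating_factor_has_vector_derivative:
  fixes z :: complex
  assumes der: "\<And>v. v \<in> {-1..1} \<Longrightarrow> (P has_vector_derivative D v) (at v within {-1..1})"
    and eq: "\<And>v. v \<in> {-1..1} \<Longrightarrow> f v = z * P v - D v"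
    and s: "s \<in> T" and T: "T \<subseteq> {-1..1}"
  shows "((\<lambda>s. exp (- (z * of_real s)) * P s) has_vector_derivative - (exp (- (z * of_real s)) * f s))
    (at s within T)"
proof -
  have s': "s \<in> {-1..1}"
    using s T by blast
  have "((\<lambda>s. exp (- (z * of_real s)) * P s) has_vector_derivative
      exp ((-z) * of_real s) * D s + (-z) * exp ((-z) * of_real s) * P s) (at s within {-1..1})"
    using has_vector_derivative_mult[OF has_vector_derivative_exp_real[of "-z"] der[OF s']] by simp
  moreover have "exp ((-z) * of_real s) * D s + (-z) * exp ((-z) * of_real s) * P s
      = - (exp (- (z * of_real s)) * f s)"
    by (simp add: eq[OF s'] algebra_simps)
  ultimately show ?thesis
    using has_vector_derivative_within_subset T by fastforce
qed

lemma variation_of_constants: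
  assumes der: "\<And>v. v \<in> {-1..1} \<Longrightarrow> (P has_vector_derivative D v) (at v within {-1..1})"
    and f: "continuous_on {-1..1} f"
    and eq: "\<And>v. v \<in> {-1..1} \<Longrightarrow> f v = z * P v - D v"
    and v: "v \<in> {-1..1}"
  shows "P v = exp (z * of_real v) * P 0 + Iz z f v"
proof -
  define g where "g s = exp (- (z * of_real s)) * P s" for s
  note g = integrating_factor_has_vector_derivative[OF der eq, folded g_def]
  have integral: "integral T (\<lambda>s. exp (z * of_real (v - s)) * f s) = exp (z * of_real v) * (g a - g b)"
    if "((\<lambda>s. - (exp (- (z * of_real s)) * f s)) has_integral g b - g a) T" for T a b
  proof -
    have "integral T (\<lambda>s. exp (- (z * of_real s)) * f s) = g a - g b"
      using integral_unique[OF that] by (simp add: integral_neg minus_equation_iff[of "integral _ _"])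
    then show ?thesis
      by (simp only: exp_real_diff mult.assoc integral_mult_right)
  qed
  have g_v: "exp (z * of_real v) * g v = P v"
    by (simp add: g_def exp_minus flip: mult.assoc)
  show ?thesis
  proof (cases "0 \<le> v")
    case True
    have "((\<lambda>s. - (exp (- (z * of_real s)) * f s)) has_integral g v - g 0) {0..v}"
      using True v by (intro fundamental_theorem_of_calculus g) auto
    from integral[OF this] show ?thesis
      using True g_v unfolding Iz_def by (simp add: g_def right_diff_distrib)
  next
    case False
    have "((\<lambda>s. - (exp (- (z * of_real s)) * f s)) has_integral g 0 - g v) {v..0}"
      using False v by (intro fundamental_theorem_of_calculus g) auto
    from integral[OF this] show ?thesis
      using False g_v unfolding Iz_def by (simp add: g_def right_diff_distrib)
  qed
qed

lemma Iz_at_0 [simp]: "Iz z f 0 = 0"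
  unfolding Iz_def by simp

lemma Iz_zero [simp]: "Iz z (\<lambda>_. 0) v = 0"
  unfolding Iz_def by simp

lemma Iz_eq_integral_from_minus1:
  fixes z :: complex
  assumes f: "continuous_on {-1..1} f" and v: "v \<in> {-1..1}"
  defines "h \<equiv> \<lambda>s. exp (- (z * of_real s)) * f s"
  shows "Iz z f v = - (exp (z * of_real v) * (integral {-1..v} h - integral {-1..0} h))"
proof -
  have h: "h integrable_on {a..b}" if "{a..b} \<subseteq> {-1..1}" for a b
    unfolding h_def
    by (intro integrable_continuous_real continuous_intros continuous_on_subset[OF f that])
  have integral: "integral S (\<lambda>s. exp (z * of_real (v - s)) * f s) = exp (z * of_real v) * integral S h" for S
    unfolding h_def by (simp only: exp_real_diff mult.assoc integral_mult_right)
  show ?thesis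
  proof (cases "0 \<le> v")
    case True
    have "integral {-1..0} h + integral {0..v} h = integral {-1..v} h"
      using True v h by (intro Henstock_Kurzweil_Integration.integral_combine) auto
    then have "integral {0..v} h = integral {-1..v} h - integral {-1..0} h"
      by (simp add: algebra_simps)
    then show ?thesis
      using True unfolding Iz_def integral by simp
  next
    case False
    have "integral {-1..v} h + integral {v..0} h = integral {-1..0} h"
      using False v h by (intro Henstock_Kurzweil_Integration.integral_combine) auto
    then have "integral {v..0} h = integral {-1..0} h - integral {-1..v} h"
      by (simp add: algebra_simps)
    then show ?thesis
      using False unfolding Iz_def integral by (simp add: right_diff_distrib)
  qed
qed

lemma Iz_has_vector_derivative:
  fixes z :: complex
  assumes f: "continuous_on {-1..1} f" and v: "v \<in> {-1..1}"
  shows "(Iz z f has_vector_derivative z * Iz z f v - f v) (at v within {-1..1})"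
proof -
  define h where "h s = exp (- (z * of_real s)) * f s" for s
  define J where "J u = integral {-1..u} h - integral {-1..0} h" for u
  have Iz: "Iz z f u = - (exp (z * of_real u) * J u)" if "u \<in> {-1..1}" for u
    unfolding J_def h_def using Iz_eq_integral_from_minus1[OF f that] by simp
  have "continuous_on {-1..1} h"
    unfolding h_def by (intro continuous_intros f)
  then have "(J has_vector_derivative h v) (at v within {-1..1})"
    unfolding J_def using integral_has_vector_derivative[OF _ v]
    by (auto intro!: derivative_eq_intros)
  then have D: "((\<lambda>u. - (exp (z * of_real u) * J u)) has_vector_derivative
      - (exp (z * of_real v) * h v + z * exp (z * of_real v) * J v)) (at v within {-1..1})"
    using has_vector_derivative_minus[OF has_vector_derivative_mult[OF has_vector_derivative_exp_real]]
    by simp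
  have "exp (z * of_real v) * h v = f v"
    unfolding h_def by (simp add: exp_minus flip: mult.assoc)
  then have "- (exp (z * of_real v) * h v + z * exp (z * of_real v) * J v) = z * Iz z f v - f v"
    using Iz[OF v] by (simp add: algebra_simps)
  with has_vector_derivative_transform[OF v Iz D] show ?thesis
    by simp
qed

lemma Iz_continuous_on:
  assumes "continuous_on {-1..1} f"
  shows "continuous_on {-1..1} (Iz z f)"
  using continuous_on_if_has_vector_derivative[OF Iz_has_vector_derivative[OF assms]] .

lemma norm_exp_real_le:
  fixes z :: complex
  assumes "\<bar>t\<bar> \<le> 1"
  shows "norm (exp (z * of_real t)) \<le> exp (norm z)"
proof -
  have "Re (z * of_real t) \<le> norm (z * of_real t)"
    by (rule complex_Re_le_cmod)
  also have "\<dots> \<le> norm z"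
    using assms by (simp add: norm_mult mult_left_le)
  finally show ?thesis
    by (simp add: norm_exp)
qed

lemma norm_Iz_le:
  fixes z :: complex
  assumes f: "continuous_on {-1..1} f" and B: "\<And>s. s \<in> {-1..1} \<Longrightarrow> norm (f s) \<le> B"
    and v: "v \<in> {-1..1}"
  shows "norm (Iz z f v) \<le> exp (norm z) * B"
proof -
  have "norm (f 0) \<le> B"
    by (rule B) simp
  then have B0: "0 \<le> B"
    using norm_ge_zero order_trans by blast
  have bound: "norm (integral {a..b} (\<lambda>s. exp (z * of_real (v - s)) * f s)) \<le> exp (norm z) * B"
    if ab: "a \<le> b" "{a..b} \<subseteq> {-1..1}" "v \<in> {a, b}" "0 \<in> {a, b}" for a b
  proof -
    have a_b: "a \<in> {-1..1}" "b \<in> {-1..1}"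
      using ab(1,2) by auto
    have "norm (integral {a..b} (\<lambda>s. exp (z * of_real (v - s)) * f s)) \<le> exp (norm z) * B * (b - a)"
    proof (rule integral_bound)
      show "continuous_on {a..b} (\<lambda>s. exp (z * of_real (v - s)) * f s)"
        by (intro continuous_intros continuous_on_subset[OF f ab(2)])
      fix s assume s: "s \<in> {a..b}"
      then have "\<bar>v - s\<bar> \<le> 1" "s \<in> {-1..1}"
        using ab(3,4) a_b ab(2)[THEN subsetD, of s] by auto
      then show "norm (exp (z * of_real (v - s)) * f s) \<le> exp (norm z) * B"
        unfolding norm_mult by (intro mult_mono norm_exp_real_le B) auto
    qed (use ab in auto)
    also have "\<dots> \<le> exp (norm z) * B"
      using ab(4) a_b B0 by (intro mult_left_le) auto
    finally show ?thesis .
  qed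
  show ?thesis
    using v bound[of 0 v] bound[of v 0] unfolding Iz_def by (auto split: if_splits)
qed

text \<open>The solution of \<open>P' = z P - f\<close> with \<open>P 0 = q\<close>, extended by 0 outside [-1,1].\<close>

definition vc_fun :: "complex \<Rightarrow> complex \<Rightarrow> (real \<Rightarrow> complex) \<Rightarrow> real \<Rightarrow> complex" where
  "vc_fun z q f v = (if v \<in> {-1..1} then exp (z * of_real v) * q + Iz z f v else 0)"

lemma vc_fun_has_vector_derivative:
  assumes f: "continuous_on {-1..1} f" and v: "v \<in> {-1..1}"
  shows "(vc_fun z q f has_vector_derivative z * vc_fun z q f v - f v) (at v within {-1..1})"
proof -
  have D: "((\<lambda>v. exp (z * of_real v) * q + Iz z f v) has_vector_derivative
      z * exp (z * of_real v) * q + (z * Iz z f v - f v)) (at v within {-1..1})"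
    using has_vector_derivative_add[OF has_vector_derivative_mult[OF has_vector_derivative_exp_real
          has_vector_derivative_const[of q]] Iz_has_vector_derivative[OF f v]]
    by simp
  have derivative: "z * exp (z * of_real v) * q + (z * Iz z f v - f v) = z * vc_fun z q f v - f v"
    using v by (simp add: vc_fun_def right_diff_distrib distrib_left)
  have "vc_fun z q f u = exp (z * of_real u) * q + Iz z f u" if "u \<in> {-1..1}" for u
    using that by (simp add: vc_fun_def)
  from has_vector_derivative_transform[OF v this D] show ?thesis
    unfolding derivative .
qed

lemma vc_fun_C1_on:
  assumes "continuous_on {-1..1} f"
  shows "C1_on (vc_fun z q f)"
proof (rule C1_onI[OF vc_fun_has_vector_derivative[OF assms]])
  have "continuous_on {-1..1} (\<lambda>v. exp (z * of_real v) * q + Iz z f v)"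
    by (intro continuous_intros Iz_continuous_on assms)
  then have "continuous_on {-1..1} (vc_fun z q f)"
    by (rule continuous_on_eq) (simp add: vc_fun_def)
  then show "continuous_on {-1..1} (\<lambda>v. z * vc_fun z q f v - f v)"
    by (intro continuous_intros assms)
qed

lemma dI_vc_fun:
  assumes "continuous_on {-1..1} f" "v \<in> {-1..1}"
  shows "dI (vc_fun z q f) v = z * vc_fun z q f v - f v"
  by (rule dI_eqI[OF assms(2) vc_fun_has_vector_derivative[OF assms]])

lemma vc_fun_at_0 [simp]: "vc_fun z q f 0 = q"
  by (simp add: vc_fun_def)

lemma vc_fun_at_pm1 [simp]:
  "vc_fun z q f 1 = exp z * q + Iz z f 1"
  "vc_fun z q f (-1) = exp (- z) * q + Iz z f (-1)"
  by (simp_all add: vc_fun_def)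

lemma vc_fun_outside [simp]: "v \<notin> {-1..1} \<Longrightarrow> vc_fun z q f v = 0"
  unfolding vc_fun_def by auto

lemma vc_fun_residual:
  assumes "continuous_on {-1..1} f" "\<And>v. v \<notin> {-1..1} \<Longrightarrow> f v = 0"
  shows "(\<lambda>v. z * vc_fun z q f v - dI (vc_fun z q f) v) = f"
proof
  fix v
  show "z * vc_fun z q f v - dI (vc_fun z q f) v = f v"
    using dI_vc_fun[OF assms(1)] assms(2) by (cases "v \<in> {-1..1}") (auto simp: vc_fun_def dI_def)
qed

lemma C1_on_eq_vc_fun:
  assumes "C1_on P" "\<And>v. v \<notin> {-1..1} \<Longrightarrow> P v = 0"
  shows "P = vc_fun z (P 0) (\<lambda>v. z * P v - dI P v)"
proof
  have f: "continuous_on {-1..1} (\<lambda>v. z * P v - dI P v)"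
    by (intro continuous_intros C1_on_continuous C1_on_continuous_dI assms(1))
  fix v
  show "P v = vc_fun z (P 0) (\<lambda>v. z * P v - dI P v) v"
    using variation_of_constants[OF C1_on_has_vector_derivative[OF assms(1)] f] assms(2)
    by (cases "v \<in> {-1..1}") (auto simp: vc_fun_def)
qed

section \<open>The state space and the operator\<close>

lemma st_eqI:
  fixes U V :: st
  assumes "p1 U = p1 V" "p2 U = p2 V" "xi1 U = xi1 V" "xi2 U = xi2 V" "P1 U = P1 V" "P2 U = P2 V"
  shows "U = V"
  using assms by (intro st.equality) auto

lemma XspD:
  assumes "F \<in> Xsp"
  shows "continuous_on {-1..1} (P1 F)" "continuous_on {-1..1} (P2 F)"
    and "P1 F 0 = p1 F" "P2 F 0 = p2 F"
    and "\<And>v. v \<notin> {-1..1} \<Longrightarrow> P1 F v = 0" "\<And>v. v \<notin> {-1..1} \<Longrightarrow> P2 F v = 0"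
  using assms unfolding Xsp_def by auto

lemma DspD:
  assumes "U \<in> Dsp"
  shows "U \<in> Xsp" "C1_on (P1 U)" "C1_on (P2 U)"
  using assms unfolding Dsp_def by auto

lemma stzero_in_Xsp: "stzero \<in> Xsp"
  unfolding Xsp_def stzero_def by simp

lemma stzero_in_Dsp: "stzero \<in> Dsp"
proof -
  have "C1_on (\<lambda>_. 0)"
    by (rule C1_onI[where D="\<lambda>_. 0"]) (auto intro: has_vector_derivative_const)
  then show ?thesis
    unfolding Dsp_def using stzero_in_Xsp by (simp add: stzero_def)
qed

lemma zmL_components:
  "p1 (zmL z \<kappa> w c U) = z * p1 U - xi1 U"
  "p2 (zmL z \<kappa> w c U) = z * p2 U - xi2 U"
  "xi1 (zmL z \<kappa> w c U) = z * xi1 U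
     - (- (1 + of_real \<kappa>) * p1 U + P2 U 1 + of_real \<kappa> * P2 U (-1)) / (of_real c)\<^sup>2"
  "xi2 (zmL z \<kappa> w c U) = z * xi2 U
     - (- of_real w * (1 + of_real \<kappa>) * p2 U + of_real w * (of_real \<kappa> * P1 U 1 + P1 U (-1))) / (of_real c)\<^sup>2"
  "P1 (zmL z \<kappa> w c U) = (\<lambda>v. z * P1 U v - dI (P1 U) v)"
  "P2 (zmL z \<kappa> w c U) = (\<lambda>v. z * P2 U v - dI (P2 U) v)"
  unfolding zmL_def stadd_def stscale_def Lop_def
  by (simp_all add: minus_divide_left algebra_simps, simp_all only: add_divide_distrib[symmetric],
      simp_all add: algebra_simps)

lemma dI_zero [simp]: "dI (\<lambda>_. 0) v = 0"
  using dI_eqI[OF _ has_vector_derivative_const] by (cases "v \<in> {-1..1}") (auto simp: dI_def)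

lemma zmL_stzero: "zmL z \<kappa> w c stzero = stzero"
  by (rule st_eqI) (simp_all add: zmL_components stzero_def)

lemma eigenvalue_L_iff_kernel:
  "eigenvalue_L \<kappa> w c z \<longleftrightarrow> (\<exists>U\<in>Dsp. U \<noteq> stzero \<and> zmL z \<kappa> w c U = stzero)"
proof -
  have "Lop \<kappa> w c U = stscale z U \<longleftrightarrow> zmL z \<kappa> w c U = stzero" for U
    unfolding zmL_def by (cases U, cases "Lop \<kappa> w c U") (auto simp: stadd_def stscale_def stzero_def fun_eq_iff)
  then show ?thesis
    unfolding eigenvalue_L_def by blast
qed

section \<open>Linear structure of the state space\<close>

definition coords :: "(st \<Rightarrow> complex) set" where
  "coords = {p1, p2, xi1, xi2} \<union> range (\<lambda>v U. P1 U v) \<union> range (\<lambda>v U. P2 U v)"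

lemma coords_linear:
  assumes "\<phi> \<in> coords"
  shows "\<phi> (stadd U V) = \<phi> U + \<phi> V" "\<phi> (stscale t U) = t * \<phi> U" "\<phi> stzero = 0"
  using assms unfolding coords_def by (auto simp: stadd_def stscale_def stzero_def)

lemma in_coords:
  "p1 \<in> coords" "p2 \<in> coords" "xi1 \<in> coords" "xi2 \<in> coords" "(\<lambda>U. P1 U v) \<in> coords" "(\<lambda>U. P2 U v) \<in> coords"
  unfolding coords_def by blast+

lemma st_eq_coordsI:
  assumes "\<And>\<phi>. \<phi> \<in> coords \<Longrightarrow> \<phi> U = \<phi> V"
  shows "U = V"
  using assms[OF in_coords(1)] assms[OF in_coords(2)] assms[OF in_coords(3)] assms[OF in_coords(4)]
    assms[OF in_coords(5)] assms[OF in_coords(6)]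
  by (intro st_eqI) auto

lemma coords_lincomb:
  assumes "\<phi> \<in> coords"
  shows "\<phi> (lincomb a b n) = (\<Sum>i<n. a i * \<phi> (b i))"
proof -
  have "\<phi> (foldr (\<lambda>i U. stadd (stscale (a i) (b i)) U) xs stzero) = (\<Sum>i\<leftarrow>xs. a i * \<phi> (b i))" for xs
    by (induction xs) (simp_all add: coords_linear[OF assms])
  then show ?thesis
    unfolding lincomb_def by (simp add: interv_sum_list_conv_sum_set_nat atLeast0LessThan)
qed

lemma dI_add:
  assumes "C1_on P" "C1_on Q"
  shows "dI (\<lambda>v. P v + Q v) v = dI P v + dI Q v"
  using dI_eqI[OF _ has_vector_derivative_add[OF C1_on_has_vector_derivative[OF assms(1)]
        C1_on_has_vector_derivative[OF assms(2)]]]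
  by (cases "v \<in> {-1..1}") (auto simp: dI_def)

lemma dI_scale:
  assumes "C1_on P"
  shows "dI (\<lambda>v. a * P v) v = a * dI P v"
  using dI_eqI[OF _ has_vector_derivative_mult[OF has_vector_derivative_const C1_on_has_vector_derivative[OF assms]]]
  by (cases "v \<in> {-1..1}") (auto simp: dI_def)

lemma C1_on_add:
  assumes "C1_on P" "C1_on Q"
  shows "C1_on (\<lambda>v. P v + Q v)"
  by (rule C1_onI[where D="\<lambda>v. dI P v + dI Q v"])
    (auto intro!: has_vector_derivative_add C1_on_has_vector_derivative assms continuous_intros C1_on_continuous_dI)

lemma C1_on_scale:
  assumes "C1_on P"
  shows "C1_on (\<lambda>v. a * P v)"
proof (rule C1_onI[where D="\<lambda>v. a * dI P v"])
  show "((\<lambda>v. a * P v) has_vector_derivative a * dI P v) (at v within {-1..1})" if "v \<in> {-1..1}" for v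
    using has_vector_derivative_mult[OF has_vector_derivative_const C1_on_has_vector_derivative[OF assms that]]
    by simp
qed (intro continuous_intros C1_on_continuous_dI assms)

lemma stadd_in_Dsp: "U \<in> Dsp \<Longrightarrow> V \<in> Dsp \<Longrightarrow> stadd U V \<in> Dsp"
  unfolding Dsp_def Xsp_def stadd_def by (auto intro!: continuous_intros C1_on_add)

lemma stscale_in_Dsp: "U \<in> Dsp \<Longrightarrow> stscale t U \<in> Dsp"
  unfolding Dsp_def Xsp_def stscale_def by (auto intro!: continuous_intros C1_on_scale)

lemma foldr_in_Dsp:
  assumes "\<And>i. i \<in> set xs \<Longrightarrow> b i \<in> Dsp"
  shows "foldr (\<lambda>i U. stadd (stscale (a i) (b i)) U) xs stzero \<in> Dsp"
  using assms by (induction xs) (auto intro!: stadd_in_Dsp stscale_in_Dsp stzero_in_Dsp)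

lemma lincomb_in_Dsp:
  assumes "\<And>i. i < n \<Longrightarrow> b i \<in> Dsp"
  shows "lincomb a b n \<in> Dsp"
  unfolding lincomb_def by (rule foldr_in_Dsp) (use assms in auto)

lemma zmL_stadd:
  assumes "U \<in> Dsp" "V \<in> Dsp"
  shows "zmL z \<kappa> w c (stadd U V) = stadd (zmL z \<kappa> w c U) (zmL z \<kappa> w c V)"
  using DspD[OF assms(1)] DspD[OF assms(2)]
  by (intro st_eqI) (auto simp: zmL_components stadd_def dI_add algebra_simps add_divide_distrib[symmetric])

lemma zmL_stscale:
  assumes "U \<in> Dsp"
  shows "zmL z \<kappa> w c (stscale t U) = stscale t (zmL z \<kappa> w c U)"
  using DspD[OF assms]
  by (intro st_eqI) (auto simp: zmL_components stscale_def dI_scale algebra_simps times_divide_eq_right[symmetric])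

lemma zmL_lincomb:
  assumes "\<And>i. i < n \<Longrightarrow> b i \<in> Dsp"
  shows "zmL z \<kappa> w c (lincomb a b n) = lincomb a (\<lambda>i. zmL z \<kappa> w c (b i)) n"
proof -
  have "zmL z \<kappa> w c (foldr (\<lambda>i U. stadd (stscale (a i) (b i)) U) xs stzero)
      = foldr (\<lambda>i U. stadd (stscale (a i) (zmL z \<kappa> w c (b i))) U) xs stzero"
    if "\<And>i. i \<in> set xs \<Longrightarrow> b i \<in> Dsp" for xs
    using that
  proof (induction xs)
    case (Cons x xs)
    have "b x \<in> Dsp" "foldr (\<lambda>i U. stadd (stscale (a i) (b i)) U) xs stzero \<in> Dsp"
      using Cons.prems by (auto intro: foldr_in_Dsp)
    then show ?case
      using Cons by (simp add: zmL_stadd stscale_in_Dsp zmL_stscale)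
  qed (simp add: zmL_stzero)
  from this[of "[0..<n]"] show ?thesis
    unfolding lincomb_def using assms by simp
qed

lemma kerpow_stscale: "U \<in> kerpow \<kappa> w c z k \<Longrightarrow> stscale t U \<in> kerpow \<kappa> w c z k"
proof (induction k arbitrary: U)
  case 0
  then show ?case
    by (simp add: stscale_def stzero_def)
next
  case (Suc k)
  then show ?case
    by (auto simp: zmL_stscale intro: stscale_in_Dsp)
qed

lemma stadd_stzero: "stadd U stzero = U"
  by (rule st_eqI) (simp_all add: stadd_def stzero_def)

lemma lincomb_zero: "lincomb (\<lambda>_. 0) b n = stzero"
  by (rule st_eq_coordsI) (simp add: coords_lincomb coords_linear)

section \<open>The characteristic matrix\<close>

definition M11 :: "real \<Rightarrow> real \<Rightarrow> real \<Rightarrow> complex \<Rightarrow> complex" where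
  "M11 \<kappa> w c z = (of_real c)\<^sup>2 * z\<^sup>2 + 1 + of_real \<kappa>"

definition M12 :: "real \<Rightarrow> real \<Rightarrow> real \<Rightarrow> complex \<Rightarrow> complex" where
  "M12 \<kappa> w c z = - (exp z + of_real \<kappa> * exp (- z))"

definition M21 :: "real \<Rightarrow> real \<Rightarrow> real \<Rightarrow> complex \<Rightarrow> complex" where
  "M21 \<kappa> w c z = - (of_real w * (of_real \<kappa> * exp z + exp (- z)))"

definition M22 :: "real \<Rightarrow> real \<Rightarrow> real \<Rightarrow> complex \<Rightarrow> complex" where
  "M22 \<kappa> w c z = (of_real c)\<^sup>2 * z\<^sup>2 + of_real w * (1 + of_real \<kappa>)"

lemma detM_eq_entries: "detM \<kappa> w c z = M11 \<kappa> w c z * M22 \<kappa> w c z - M12 \<kappa> w c z * M21 \<kappa> w c z"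
  unfolding detM_def Mmat_def det_2 M11_def M12_def M21_def M22_def
  by (simp only: vector_2)

lemma detM_closed_form:
  "detM \<kappa> w c z = (of_real c)^4 * z^4
     + (of_real c)\<^sup>2 * (1 + of_real \<kappa>) * (1 + of_real w) * z\<^sup>2
     + 2 * of_real \<kappa> * of_real w * (1 - cosh (2 * z))"
proof -
  define X Y where "X = exp z" and "Y = exp (- z)"
  have XY: "X * Y = 1"
    unfolding X_def Y_def by (simp add: exp_minus)
  have cosh: "cosh (2 * z) = (X * X + Y * Y) / 2"
    unfolding cosh_def X_def Y_def by (simp add: scaleR_conv_of_real flip: exp_add)
  have "detM \<kappa> w c z = (of_real c)^4 * z^4
      + (of_real c)\<^sup>2 * (1 + of_real \<kappa>) * (1 + of_real w) * z\<^sup>2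
      + 2 * of_real \<kappa> * of_real w - of_real \<kappa> * of_real w * (X * X + Y * Y)
      + of_real w * (1 + (of_real \<kappa>)\<^sup>2) * (1 - X * Y)"
    unfolding detM_eq_entries M11_def M12_def M21_def M22_def X_def Y_def by algebra
  then show ?thesis
    unfolding cosh XY by (simp add: right_diff_distrib)
qed

definition rhsA :: "real \<Rightarrow> real \<Rightarrow> complex \<Rightarrow> st \<Rightarrow> complex" where
  "rhsA \<kappa> c z F = (of_real c)\<^sup>2 * xi1 F + (of_real c)\<^sup>2 * z * p1 F
     + Iz z (P2 F) 1 + of_real \<kappa> * Iz z (P2 F) (-1)"

definition rhsB :: "real \<Rightarrow> real \<Rightarrow> real \<Rightarrow> complex \<Rightarrow> st \<Rightarrow> complex" where
  "rhsB \<kappa> w c z F = (of_real c)\<^sup>2 * xi2 F + (of_real c)\<^sup>2 * z * p2 F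
     + of_real \<kappa> * of_real w * Iz z (P1 F) 1 + of_real w * Iz z (P1 F) (-1)"

definition vc_state :: "complex \<Rightarrow> complex \<Rightarrow> complex \<Rightarrow> st \<Rightarrow> st" where
  "vc_state z q1 q2 F = \<lparr>p1 = q1, p2 = q2, xi1 = z * q1 - p1 F, xi2 = z * q2 - p2 F,
     P1 = vc_fun z q1 (P1 F), P2 = vc_fun z q2 (P2 F)\<rparr>"

lemma vc_state_in_Dsp:
  assumes "F \<in> Xsp"
  shows "vc_state z q1 q2 F \<in> Dsp"
proof -
  have "C1_on (vc_fun z q1 (P1 F))" "C1_on (vc_fun z q2 (P2 F))"
    using XspD[OF assms] by (simp_all add: vc_fun_C1_on)
  then show ?thesis
    unfolding Dsp_def Xsp_def by (simp add: vc_state_def C1_on_continuous)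
qed

text \<open>The boundary terms of \<open>L\<close> turn \<open>(z - L) U = F\<close>, for \<open>U\<close> given by variation of constants,
  into the linear system \<open>M(z) (p1 U, p2 U) = (A, B)\<close>.\<close>

lemma zmL_vc_state:
  assumes F: "F \<in> Xsp" and c: "c \<noteq> 0"
    and A: "M11 \<kappa> w c z * q1 + M12 \<kappa> w c z * q2 = rhsA \<kappa> c z F"
    and B: "M21 \<kappa> w c z * q1 + M22 \<kappa> w c z * q2 = rhsB \<kappa> w c z F"
  shows "zmL z \<kappa> w c (vc_state z q1 q2 F) = F"
proof (rule st_eqI)
  have c2: "(of_real c :: complex)\<^sup>2 \<noteq> 0"
    using c by simp
  show "xi1 (zmL z \<kappa> w c (vc_state z q1 q2 F)) = xi1 F"
    using A c2 unfolding zmL_components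
    by (simp add: vc_state_def M11_def M12_def rhsA_def field_simps) (simp add: power2_eq_square algebra_simps)
  show "xi2 (zmL z \<kappa> w c (vc_state z q1 q2 F)) = xi2 F"
    using B c2 unfolding zmL_components
    by (simp add: vc_state_def M21_def M22_def rhsB_def field_simps) (simp add: power2_eq_square algebra_simps)
  show "p1 (zmL z \<kappa> w c (vc_state z q1 q2 F)) = p1 F" "p2 (zmL z \<kappa> w c (vc_state z q1 q2 F)) = p2 F"
    by (simp_all add: zmL_components vc_state_def)
  show "P1 (zmL z \<kappa> w c (vc_state z q1 q2 F)) = P1 F" "P2 (zmL z \<kappa> w c (vc_state z q1 q2 F)) = P2 F"
    using vc_fun_residual[of "P1 F"] vc_fun_residual[of "P2 F"] XspD[OF F]
    by (simp_all add: zmL_components vc_state_def)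
qed

lemma vc_state_of_Dsp:
  fixes z :: complex and \<kappa> w c :: real
  assumes U: "U \<in> Dsp" and c: "c \<noteq> 0"
  defines "F \<equiv> zmL z \<kappa> w c U"
  shows "U = vc_state z (p1 U) (p2 U) F"
    and "M11 \<kappa> w c z * p1 U + M12 \<kappa> w c z * p2 U = rhsA \<kappa> c z F"
    and "M21 \<kappa> w c z * p1 U + M22 \<kappa> w c z * p2 U = rhsB \<kappa> w c z F"
proof -
  note C1 = DspD(2,3)[OF U] and X = XspD[OF DspD(1)[OF U]]
  have "P1 U = vc_fun z (P1 U 0) (\<lambda>v. z * P1 U v - dI (P1 U) v)"
    "P2 U = vc_fun z (P2 U 0) (\<lambda>v. z * P2 U v - dI (P2 U) v)"
    using C1 X(5,6) by (blast intro: C1_on_eq_vc_fun)+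
  then have P: "P1 U = vc_fun z (p1 U) (P1 F)" "P2 U = vc_fun z (p2 U) (P2 F)"
    unfolding F_def zmL_components X(3,4) .
  have c2: "(of_real c :: complex)\<^sup>2 \<noteq> 0"
    using c by simp
  have F: "p1 F = z * p1 U - xi1 U" "p2 F = z * p2 U - xi2 U"
    "xi1 F = z * xi1 U - (- (1 + of_real \<kappa>) * p1 U + P2 U 1 + of_real \<kappa> * P2 U (-1)) / (of_real c)\<^sup>2"
    "xi2 F = z * xi2 U - (- of_real w * (1 + of_real \<kappa>) * p2 U
       + of_real w * (of_real \<kappa> * P1 U 1 + P1 U (-1))) / (of_real c)\<^sup>2"
    unfolding F_def zmL_components by simp_all
  show "U = vc_state z (p1 U) (p2 U) F"
    by (rule st_eqI) (simp_all add: vc_state_def F P)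
  have boundary: "P1 U 1 = exp z * p1 U + Iz z (P1 F) 1" "P1 U (-1) = exp (- z) * p1 U + Iz z (P1 F) (-1)"
    "P2 U 1 = exp z * p2 U + Iz z (P2 F) 1" "P2 U (-1) = exp (- z) * p2 U + Iz z (P2 F) (-1)"
    using P by simp_all
  show "M11 \<kappa> w c z * p1 U + M12 \<kappa> w c z * p2 U = rhsA \<kappa> c z F"
    unfolding rhsA_def F(1,3) boundary(3,4) using c2
    by (simp add: M11_def M12_def field_simps) (simp add: power2_eq_square algebra_simps)
  show "M21 \<kappa> w c z * p1 U + M22 \<kappa> w c z * p2 U = rhsB \<kappa> w c z F"
    unfolding rhsB_def F(2,4) boundary(1,2) using c2
    by (simp add: M21_def M22_def field_simps) (simp add: power2_eq_square algebra_simps)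
qed

section \<open>The spectrum\<close>

definition res_p1 :: "real \<Rightarrow> real \<Rightarrow> real \<Rightarrow> complex \<Rightarrow> st \<Rightarrow> complex" where
  "res_p1 \<kappa> w c z F = (M22 \<kappa> w c z * rhsA \<kappa> c z F - M12 \<kappa> w c z * rhsB \<kappa> w c z F) / detM \<kappa> w c z"

definition res_p2 :: "real \<Rightarrow> real \<Rightarrow> real \<Rightarrow> complex \<Rightarrow> st \<Rightarrow> complex" where
  "res_p2 \<kappa> w c z F = (M11 \<kappa> w c z * rhsB \<kappa> w c z F - M21 \<kappa> w c z * rhsA \<kappa> c z F) / detM \<kappa> w c z"

lemma boundary_system_iff:
  assumes "detM \<kappa> w c z \<noteq> 0"
  shows "M11 \<kappa> w c z * x + M12 \<kappa> w c z * y = rhsA \<kappa> c z F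
      \<and> M21 \<kappa> w c z * x + M22 \<kappa> w c z * y = rhsB \<kappa> w c z F
    \<longleftrightarrow> x = res_p1 \<kappa> w c z F \<and> y = res_p2 \<kappa> w c z F"
  using cramer_2x2[OF assms[unfolded detM_eq_entries]]
  unfolding res_p1_def res_p2_def detM_eq_entries .

lemma norm_le_normX:
  assumes "F \<in> Xsp"
  shows "norm (p1 F) \<le> normX F" "norm (p2 F) \<le> normX F" "norm (xi1 F) \<le> normX F" "norm (xi2 F) \<le> normX F"
    and "\<And>v. v \<in> {-1..1} \<Longrightarrow> norm (P1 F v) \<le> normX F"
    and "\<And>v. v \<in> {-1..1} \<Longrightarrow> norm (P2 F v) \<le> normX F"
proof -
  have Max: "x \<le> normX F" if "x \<in> {norm (p1 F), norm (p2 F), norm (xi1 F), norm (xi2 F),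
      Sup ((\<lambda>v. norm (P1 F v)) ` {-1..1}), Sup ((\<lambda>v. norm (P2 F v)) ` {-1..1})}" for x
    unfolding normX_def using that by (rule Max_ge[rotated]) simp
  have Sup: "norm (P v) \<le> Sup ((\<lambda>v. norm (P v)) ` {-1..1::real})"
    if "continuous_on {-1..1} P" "v \<in> {-1..1}" for P :: "real \<Rightarrow> complex" and v
  proof -
    have "compact ((\<lambda>v. norm (P v)) ` {-1..1::real})"
      by (intro compact_continuous_image continuous_intros that(1)) simp
    then show ?thesis
      by (intro cSUP_upper that(2) bounded_imp_bdd_above compact_imp_bounded)
  qed
  show "norm (p1 F) \<le> normX F" "norm (p2 F) \<le> normX F" "norm (xi1 F) \<le> normX F" "norm (xi2 F) \<le> normX F"
    by (simp_all add: Max)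
  fix v :: real assume v: "v \<in> {-1..1}"
  show "norm (P1 F v) \<le> normX F"
    by (rule order_trans[OF Sup[OF XspD(1)[OF assms] v]]) (simp add: Max)
  show "norm (P2 F v) \<le> normX F"
    by (rule order_trans[OF Sup[OF XspD(2)[OF assms] v]]) (simp add: Max)
qed

lemma normX_nonneg: "0 \<le> normX U"
  unfolding normX_def by (rule order_trans[OF norm_ge_zero Max_ge]) auto

lemma normX_leI:
  assumes "norm (p1 U) \<le> C" "norm (p2 U) \<le> C" "norm (xi1 U) \<le> C" "norm (xi2 U) \<le> C"
    and "\<And>v. v \<in> {-1..1} \<Longrightarrow> norm (P1 U v) \<le> C"
    and "\<And>v. v \<in> {-1..1} \<Longrightarrow> norm (P2 U v) \<le> C"
  shows "normX U \<le> C"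
proof -
  have "Sup ((\<lambda>v. norm (P1 U v)) ` {-1..1::real}) \<le> C" "Sup ((\<lambda>v. norm (P2 U v)) ` {-1..1::real}) \<le> C"
    by (rule cSUP_least; use assms(5,6) in simp)+
  with assms(1-4) show ?thesis
    unfolding normX_def by (subst Max_le_iff) auto
qed

lemma norm_mult_le_of_le:
  fixes x :: "'a::real_normed_algebra"
  shows "norm x \<le> N \<Longrightarrow> norm (a * x) \<le> norm a * N"
  by (rule order_trans[OF norm_mult_ineq]) (simp add: mult_left_mono)

lemma norm_boundary_form_le:
  assumes "continuous_on {-1..1} f" "\<And>s. s \<in> {-1..1} \<Longrightarrow> norm (f s) \<le> N"
    and "norm \<xi> \<le> N" "norm p \<le> N"
  shows "norm (a * \<xi> + a * z * p + b * Iz z f 1 + d * Iz z f (-1))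
    \<le> (norm a * (1 + norm z) + exp (norm z) * (norm b + norm d)) * N"
proof -
  have "norm (Iz z f 1) \<le> exp (norm z) * N" "norm (Iz z f (-1)) \<le> exp (norm z) * N"
    by (rule norm_Iz_le[OF assms(1,2)]; simp)+
  then have "norm (a * \<xi>) \<le> norm a * N" "norm (a * z * p) \<le> norm a * norm z * N"
    "norm (b * Iz z f 1) \<le> norm b * (exp (norm z) * N)"
    "norm (d * Iz z f (-1)) \<le> norm d * (exp (norm z) * N)"
    using norm_mult_le_of_le[OF assms(3), of a] norm_mult_le_of_le[OF assms(4), of "a * z"]
      norm_mult_le_of_le[of "Iz z f _"] by (simp_all add: norm_mult)
  then have "norm (a * \<xi> + a * z * p + b * Iz z f 1 + d * Iz z f (-1))
      \<le> norm a * N + norm a * norm z * N + norm b * (exp (norm z) * N) + norm d * (exp (norm z) * N)"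
    by (smt (verit) norm_triangle_ineq)
  also have "\<dots> = (norm a * (1 + norm z) + exp (norm z) * (norm b + norm d)) * N"
    by (simp add: algebra_simps)
  finally show ?thesis .
qed

lemma rhs_bounded:
  "\<exists>K\<ge>0. \<forall>F\<in>Xsp. norm (rhsA \<kappa> c z F) \<le> K * normX F \<and> norm (rhsB \<kappa> w c z F) \<le> K * normX F"
proof (intro exI conjI ballI)
  let ?K = "c\<^sup>2 * (1 + norm z) + exp (norm z) * (1 + \<bar>\<kappa>\<bar> + \<bar>\<kappa>\<bar> * \<bar>w\<bar> + \<bar>w\<bar>)"
  show "0 \<le> ?K"
    by simp
  fix F assume F: "F \<in> Xsp"
  note bound = norm_boundary_form_le[OF _ _ norm_le_normX(3,1)[OF F]]
    norm_boundary_form_le[OF _ _ norm_le_normX(4,2)[OF F]]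
  have "norm (rhsA \<kappa> c z F) \<le> (c\<^sup>2 * (1 + norm z) + exp (norm z) * (1 + \<bar>\<kappa>\<bar>)) * normX F"
    using bound(1)[OF XspD(2)[OF F] norm_le_normX(6)[OF F], of "(of_real c)\<^sup>2" z 1 "of_real \<kappa>"]
    by (simp add: rhsA_def norm_power)
  also have "\<dots> \<le> ?K * normX F"
    by (intro mult_right_mono normX_nonneg) (simp add: algebra_simps)
  finally show "norm (rhsA \<kappa> c z F) \<le> ?K * normX F" .
  have "norm (rhsB \<kappa> w c z F) \<le> (c\<^sup>2 * (1 + norm z) + exp (norm z) * (\<bar>\<kappa>\<bar> * \<bar>w\<bar> + \<bar>w\<bar>)) * normX F"
    using bound(2)[OF XspD(1)[OF F] norm_le_normX(5)[OF F], of "(of_real c)\<^sup>2" z "of_real \<kappa> * of_real w" "of_real w"]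
    by (simp add: rhsB_def norm_power norm_mult)
  also have "\<dots> \<le> ?K * normX F"
    by (intro mult_right_mono normX_nonneg) (simp add: algebra_simps)
  finally show "norm (rhsB \<kappa> w c z F) \<le> ?K * normX F" .
qed

lemma res_p_bounded:
  assumes "detM \<kappa> w c z \<noteq> 0"
  shows "\<exists>Q\<ge>0. \<forall>F\<in>Xsp. norm (res_p1 \<kappa> w c z F) \<le> Q * normX F \<and> norm (res_p2 \<kappa> w c z F) \<le> Q * normX F"
proof -
  obtain K where K: "0 \<le> K"
    and rhs: "\<And>F. F \<in> Xsp \<Longrightarrow> norm (rhsA \<kappa> c z F) \<le> K * normX F \<and> norm (rhsB \<kappa> w c z F) \<le> K * normX F"
    using rhs_bounded by blast
  define S where "S = norm (M11 \<kappa> w c z) + norm (M12 \<kappa> w c z) + norm (M21 \<kappa> w c z) + norm (M22 \<kappa> w c z)"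
  have comb: "norm (m * A - m' * B) / norm (detM \<kappa> w c z) \<le> S * K / norm (detM \<kappa> w c z) * normX F"
    if "norm m + norm m' \<le> S" "norm A \<le> K * normX F" "norm B \<le> K * normX F"
    for m m' A B :: complex and F
  proof -
    have "norm (m * A - m' * B) \<le> norm m * (K * normX F) + norm m' * (K * normX F)"
      using norm_mult_le_of_le[OF that(2), of m] norm_mult_le_of_le[OF that(3), of m']
      by (smt (verit) norm_triangle_ineq4)
    also have "\<dots> \<le> S * (K * normX F)"
      using that(1) K normX_nonneg[of F]
      by (simp add: distrib_right[symmetric] mult_right_mono)
    finally show ?thesis
      by (simp add: divide_right_mono)
  qed
  show ?thesis
  proof (intro exI conjI ballI)
    show "0 \<le> S * K / norm (detM \<kappa> w c z)"
      using K by (simp add: S_def)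
    fix F assume "F \<in> Xsp"
    note rhs = rhs[OF this]
    show "norm (res_p1 \<kappa> w c z F) \<le> S * K / norm (detM \<kappa> w c z) * normX F"
      unfolding res_p1_def norm_divide by (rule comb) (use rhs in \<open>simp_all add: S_def\<close>)
    show "norm (res_p2 \<kappa> w c z F) \<le> S * K / norm (detM \<kappa> w c z) * normX F"
      unfolding res_p2_def norm_divide by (rule comb) (use rhs in \<open>simp_all add: S_def\<close>)
  qed
qed

lemma normX_vc_state_le:
  assumes F: "F \<in> Xsp" and Q: "0 \<le> Q"
    and q: "norm q1 \<le> Q * normX F" "norm q2 \<le> Q * normX F"
  shows "normX (vc_state z q1 q2 F) \<le> (1 + norm z + exp (norm z)) * (Q + 1) * normX F"
proof -
  define N E where "N = normX F" and "E = exp (norm z)"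
  define C where "C = (1 + norm z + E) * (Q + 1) * N"
  note bounds = norm_le_normX[OF F, folded N_def] and q = q[folded N_def]
  have N: "0 \<le> N" and E: "0 \<le> E"
    unfolding N_def E_def by (simp_all add: normX_nonneg)
  then have C: "Q * N \<le> C" "norm z * (Q * N) + N \<le> C" "E * (Q * N) + E * N \<le> C"
    unfolding C_def using Q by (simp_all add: algebra_simps)
  have xi: "norm (z * q - p) \<le> C" if "norm q \<le> Q * N" "norm p \<le> N" for q p
    using norm_mult_le_of_le[OF that(1), of z] that(2) C(2) by (smt (verit) norm_triangle_ineq4)
  have P: "norm (vc_fun z q f v) \<le> C"
    if "norm q \<le> Q * N" "continuous_on {-1..1} f" "\<And>s. s \<in> {-1..1} \<Longrightarrow> norm (f s) \<le> N" for q f v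
  proof (cases "v \<in> {-1..1}")
    case True
    then have "norm (exp (z * of_real v) * q) \<le> E * (Q * N)"
      unfolding E_def norm_mult using that(1) by (intro mult_mono norm_exp_real_le) auto
    moreover have "norm (Iz z f v) \<le> E * N"
      unfolding E_def by (rule norm_Iz_le[OF that(2,3) True])
    ultimately show ?thesis
      using True C(3) unfolding vc_fun_def by (smt (verit) norm_triangle_ineq)
  next
    case False
    then show ?thesis
      using C(1) mult_nonneg_nonneg[OF Q N] by simp
  qed
  have "norm q1 \<le> C" "norm q2 \<le> C"
    using q C(1) by linarith+
  then have "normX (vc_state z q1 q2 F) \<le> C"
    using xi[OF q(1) bounds(1)] xi[OF q(2) bounds(2)]
      P[OF q(1) XspD(1)[OF F] bounds(5)] P[OF q(2) XspD(2)[OF F] bounds(6)]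
    by (intro normX_leI) (simp_all add: vc_state_def)
  then show ?thesis
    unfolding C_def N_def E_def .
qed

lemma Dsp_eq_vc_state_res:
  assumes c: "c \<noteq> 0" and d: "detM \<kappa> w c z \<noteq> 0" and U: "U \<in> Dsp"
  defines "F \<equiv> zmL z \<kappa> w c U"
  shows "U = vc_state z (res_p1 \<kappa> w c z F) (res_p2 \<kappa> w c z F) F"
proof -
  note U_eq = vc_state_of_Dsp[OF U c, where z=z and \<kappa>=\<kappa> and w=w, folded F_def]
  have "p1 U = res_p1 \<kappa> w c z F \<and> p2 U = res_p2 \<kappa> w c z F"
    using U_eq(2,3) unfolding boundary_system_iff[OF d, symmetric] by blast
  then have res: "res_p1 \<kappa> w c z F = p1 U" "res_p2 \<kappa> w c z F = p2 U"
    by simp_all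
  show ?thesis
    unfolding res by (rule U_eq(1))
qed

lemma resolvent_set_if_detM_nonzero:
  assumes c: "c \<noteq> 0" and d: "detM \<kappa> w c z \<noteq> 0"
  shows "z \<in> resolvent_set \<kappa> w c"
  unfolding resolvent_set_def
proof (intro CollectI conjI ballI)
  fix F assume F: "F \<in> Xsp"
  define U where "U = vc_state z (res_p1 \<kappa> w c z F) (res_p2 \<kappa> w c z F) F"
  have "M11 \<kappa> w c z * res_p1 \<kappa> w c z F + M12 \<kappa> w c z * res_p2 \<kappa> w c z F = rhsA \<kappa> c z F"
    "M21 \<kappa> w c z * res_p1 \<kappa> w c z F + M22 \<kappa> w c z * res_p2 \<kappa> w c z F = rhsB \<kappa> w c z F"
    using boundary_system_iff[OF d, of "res_p1 \<kappa> w c z F" "res_p2 \<kappa> w c z F" F] by simp_all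
  then have "U \<in> Dsp \<and> zmL z \<kappa> w c U = F"
    unfolding U_def using vc_state_in_Dsp[OF F] zmL_vc_state[OF F c] by simp
  then show "\<exists>!U. U \<in> Dsp \<and> zmL z \<kappa> w c U = F"
  proof (rule ex1I)
    fix V assume V: "V \<in> Dsp \<and> zmL z \<kappa> w c V = F"
    from Dsp_eq_vc_state_res[OF c d conjunct1[OF V]] show "V = U"
      unfolding U_def conjunct2[OF V] .
  qed
next
  obtain Q where Q: "0 \<le> Q"
    "\<And>F. F \<in> Xsp \<Longrightarrow> norm (res_p1 \<kappa> w c z F) \<le> Q * normX F \<and> norm (res_p2 \<kappa> w c z F) \<le> Q * normX F"
    using res_p_bounded[OF d] by blast
  have "normX U \<le> (1 + norm z + exp (norm z)) * (Q + 1) * normX (zmL z \<kappa> w c U)"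
    if "U \<in> Dsp" "zmL z \<kappa> w c U \<in> Xsp" for U
    using ord_eq_le_trans[OF arg_cong[OF Dsp_eq_vc_state_res[OF c d that(1)], of normX]
        normX_vc_state_le[OF that(2) Q(1) conjunct1[OF Q(2)] conjunct2[OF Q(2)], OF that(2) that(2)]] .
  then show "\<exists>C. \<forall>U\<in>Dsp. zmL z \<kappa> w c U \<in> Xsp \<longrightarrow> normX U \<le> C * normX (zmL z \<kappa> w c U)"
    by blast
qed

lemma eigenvector_if_detM_zero:
  assumes c: "c \<noteq> 0" and d: "detM \<kappa> w c z = 0"
  shows "\<exists>U\<in>Dsp. U \<noteq> stzero \<and> zmL z \<kappa> w c U = stzero"
proof -
  obtain x y where xy: "x \<noteq> 0 \<or> y \<noteq> 0" "M11 \<kappa> w c z * x + M12 \<kappa> w c z * y = 0"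
    "M21 \<kappa> w c z * x + M22 \<kappa> w c z * y = 0"
    using singular_2x2_kernel[OF d[unfolded detM_eq_entries]] by blast
  have "vc_state z x y stzero \<in> Dsp"
    by (rule vc_state_in_Dsp[OF stzero_in_Xsp])
  moreover have "zmL z \<kappa> w c (vc_state z x y stzero) = stzero"
    using xy by (intro zmL_vc_state[OF stzero_in_Xsp c]) (simp_all add: rhsA_def rhsB_def stzero_def)
  moreover have "vc_state z x y stzero \<noteq> stzero"
    using xy(1) by (auto simp: vc_state_def stzero_def)
  ultimately show ?thesis
    by blast
qed

lemma kernel_trivial_if_resolvent:
  assumes "z \<in> resolvent_set \<kappa> w c" "U \<in> Dsp" "zmL z \<kappa> w c U = stzero"
  shows "U = stzero"
proof -
  have "\<exists>!U. U \<in> Dsp \<and> zmL z \<kappa> w c U = stzero"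
    using assms(1) stzero_in_Xsp unfolding resolvent_set_def by blast
  with assms(2,3) show ?thesis
    using stzero_in_Dsp zmL_stzero[of z \<kappa> w c] by blast
qed

lemma resolvent_set_iff_detM_nonzero:
  assumes "c \<noteq> 0"
  shows "z \<in> resolvent_set \<kappa> w c \<longleftrightarrow> detM \<kappa> w c z \<noteq> 0"
  using resolvent_set_if_detM_nonzero[OF assms] eigenvector_if_detM_zero[OF assms]
    kernel_trivial_if_resolvent by blast

lemma spectrum_L_eq_zeros_detM:
  assumes "c \<noteq> 0"
  shows "spectrum_L \<kappa> w c = {z. detM \<kappa> w c z = 0}"
  unfolding spectrum_L_def by (auto simp: resolvent_set_iff_detM_nonzero[OF assms])

lemma eigenvalue_L_iff_detM_zero:
  assumes "c \<noteq> 0"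
  shows "eigenvalue_L \<kappa> w c z \<longleftrightarrow> detM \<kappa> w c z = 0"
  unfolding eigenvalue_L_iff_kernel
  using eigenvector_if_detM_zero[OF assms] resolvent_set_if_detM_nonzero[OF assms]
    kernel_trivial_if_resolvent by blast

lemma Res_eq_vc_state:
  assumes c: "c \<noteq> 0" and z: "z \<in> resolvent_set \<kappa> w c" and F: "F \<in> Xsp"
  shows "Res \<kappa> w c z F = vc_state z (res_p1 \<kappa> w c z F) (res_p2 \<kappa> w c z F) F"
proof -
  have "\<exists>!U. U \<in> Dsp \<and> zmL z \<kappa> w c U = F"
    using z F unfolding resolvent_set_def by blast
  then have R: "Res \<kappa> w c z F \<in> Dsp" "zmL z \<kappa> w c (Res \<kappa> w c z F) = F"
    unfolding Res_def by (rule theI'[THEN conjunct1], rule theI'[THEN conjunct2])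
  have "detM \<kappa> w c z \<noteq> 0"
    using z resolvent_set_iff_detM_nonzero[OF c] by blast
  from Dsp_eq_vc_state_res[OF c this R(1)] show ?thesis
    unfolding R(2) .
qed

section \<open>The kernel of the characteristic matrix\<close>

lemma M_offdiagonal_zero:
  assumes \<kappa>: "\<kappa> > 0" and w: "w > 0" and M: "M12 \<kappa> w c z = 0" "M21 \<kappa> w c z = 0"
  shows "\<kappa> = 1" "exp (4 * z) = 1"
proof -
  have e12: "exp z = - (of_real \<kappa> * exp (- z))" and "of_real \<kappa> * exp z + exp (- z) = 0"
    using M w unfolding M12_def M21_def by (auto simp: add_eq_0_iff)
  then have "(1 - (of_real \<kappa>)\<^sup>2) * exp (- z) = 0"
    by (simp add: algebra_simps power2_eq_square)
  then have "(of_real \<kappa> :: complex)\<^sup>2 = 1"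
    by simp
  then have "\<kappa>\<^sup>2 = 1"
    by (metis of_real_eq_1_iff of_real_power)
  with \<kappa> show \<kappa>1: "\<kappa> = 1"
    by (simp add: power2_eq_1_iff)
  have "exp z * exp z = - (exp (- z) * exp z)"
    using e12 unfolding \<kappa>1 by simp
  then have "exp z * exp z = -1"
    by (simp add: exp_minus)
  moreover have "exp (4 * z) = (exp z * exp z) * (exp z * exp z)"
    by (simp only: exp_add[symmetric]) (simp add: algebra_simps)
  ultimately show "exp (4 * z) = 1"
    by simp
qed

lemma M11_zero_imaginary:
  assumes c: "\<bar>c\<bar> > 1" and re: "Re z = 0" and M: "M11 1 w c z = 0"
  shows "Im z \<noteq> 0" "\<bar>Im z\<bar> < pi / 2"
proof -
  have "Re (M11 1 w c z) = 0"
    using M by simp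
  then have cy: "c\<^sup>2 * (Im z)\<^sup>2 = 2"
    using re unfolding M11_def by (simp add: power2_eq_square)
  then show y: "Im z \<noteq> 0"
    by auto
  have "1 < c\<^sup>2"
    using c by (metis abs_ge_zero one_less_power abs_power2 pos2 power2_abs)
  with y have "(Im z)\<^sup>2 * 1 < (Im z)\<^sup>2 * c\<^sup>2"
    by (intro mult_strict_left_mono) simp_all
  with cy have "(Im z)\<^sup>2 < 2"
    by (simp add: mult.commute)
  moreover have "3 * 3 < pi * pi"
    using pi_gt3 by (intro mult_strict_mono) auto
  ultimately have "\<bar>Im z\<bar>\<^sup>2 < (pi / 2)\<^sup>2"
    by (simp add: power2_eq_square)
  then show "\<bar>Im z\<bar> < pi / 2"
    by (rule power2_less_imp_less) simp
qed

text \<open>For \<open>\<bar>c\<bar> > 1\<close> the matrix \<open>M(z)\<close> never vanishes: that would force \<open>z = i y\<close> with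
  \<open>e\<^sup>4\<^sup>z = 1\<close>, i.e. \<open>y \<in> (\<pi>/2) \<int>\<close>, while \<open>M11(z) = 0\<close> gives \<open>0 < \<bar>y\<bar> < \<pi>/2\<close>.\<close>

lemma M_nonzero:
  assumes \<kappa>: "\<kappa> > 0" and w: "w > 0" and c: "\<bar>c\<bar> > 1"
  shows "\<not> (M11 \<kappa> w c z = 0 \<and> M12 \<kappa> w c z = 0 \<and> M21 \<kappa> w c z = 0 \<and> M22 \<kappa> w c z = 0)"
proof
  assume M: "M11 \<kappa> w c z = 0 \<and> M12 \<kappa> w c z = 0 \<and> M21 \<kappa> w c z = 0 \<and> M22 \<kappa> w c z = 0"
  then have \<kappa>1: "\<kappa> = 1" and "exp (4 * z) = 1"
    using M_offdiagonal_zero[OF \<kappa> w] by auto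
  then obtain n :: int where re: "Re z = 0" and im: "Im (4 * z) = of_int (2 * n) * pi"
    unfolding exp_eq_1 by auto
  have y: "Im z \<noteq> 0" "\<bar>Im z\<bar> < pi / 2"
    using M11_zero_imaginary[OF c re] M \<kappa>1 by auto
  have n: "2 * \<bar>Im z\<bar> = pi * \<bar>of_int n\<bar>"
    using arg_cong[OF im, of abs] by (simp add: abs_mult)
  show False
  proof (cases "n = 0")
    case True
    with y(1) n show False
      by simp
  next
    case False
    then have "pi * 1 \<le> pi * \<bar>of_int n :: real\<bar>"
      by (intro mult_left_mono) auto
    with y(2) n show False
      by linarith
  qed
qed

definition adj1 :: "real \<Rightarrow> real \<Rightarrow> real \<Rightarrow> complex \<Rightarrow> complex \<Rightarrow> complex \<Rightarrow> complex" where
  "adj1 \<kappa> w c e1 e2 z = M22 \<kappa> w c z * e1 - M12 \<kappa> w c z * e2"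

definition adj2 :: "real \<Rightarrow> real \<Rightarrow> real \<Rightarrow> complex \<Rightarrow> complex \<Rightarrow> complex \<Rightarrow> complex" where
  "adj2 \<kappa> w c e1 e2 z = M11 \<kappa> w c z * e2 - M21 \<kappa> w c z * e1"

lemma M_adj:
  "M11 \<kappa> w c z * adj1 \<kappa> w c e1 e2 z + M12 \<kappa> w c z * adj2 \<kappa> w c e1 e2 z = detM \<kappa> w c z * e1"
  "M21 \<kappa> w c z * adj1 \<kappa> w c e1 e2 z + M22 \<kappa> w c z * adj2 \<kappa> w c e1 e2 z = detM \<kappa> w c z * e2"
  unfolding adj1_def adj2_def detM_eq_entries by algebra+

lemma adj_spans_kernel:
  assumes "\<kappa> > 0" "w > 0" "\<bar>c\<bar> > 1"
  obtains e1 e2 where "adj1 \<kappa> w c e1 e2 z \<noteq> 0 \<or> adj2 \<kappa> w c e1 e2 z \<noteq> 0"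
    and "\<And>x y. M11 \<kappa> w c z * x + M12 \<kappa> w c z * y = 0 \<Longrightarrow> M21 \<kappa> w c z * x + M22 \<kappa> w c z * y = 0 \<Longrightarrow>
      \<exists>t. x = t * adj1 \<kappa> w c e1 e2 z \<and> y = t * adj2 \<kappa> w c e1 e2 z"
proof (cases "M21 \<kappa> w c z \<noteq> 0 \<or> M22 \<kappa> w c z \<noteq> 0")
  case True
  show ?thesis
  proof (rule that[of 1 0])
    fix x y assume "M21 \<kappa> w c z * x + M22 \<kappa> w c z * y = 0"
    then show "\<exists>t. x = t * adj1 \<kappa> w c 1 0 z \<and> y = t * adj2 \<kappa> w c 1 0 z"
      using kernel_of_nonzero_row[OF True] by (simp add: adj1_def adj2_def)
  qed (use True in \<open>auto simp: adj1_def adj2_def\<close>)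
next
  case False
  then have row1: "M11 \<kappa> w c z \<noteq> 0 \<or> M12 \<kappa> w c z \<noteq> 0"
    using M_nonzero[OF assms, of z] by auto
  show ?thesis
  proof (rule that[of 0 1])
    fix x y assume "M11 \<kappa> w c z * x + M12 \<kappa> w c z * y = 0"
    then obtain t where "x = t * M12 \<kappa> w c z" "y = - (t * M11 \<kappa> w c z)"
      using kernel_of_nonzero_row[OF row1] by blast
    then show "\<exists>t. x = t * adj1 \<kappa> w c 0 1 z \<and> y = t * adj2 \<kappa> w c 0 1 z"
      by (intro exI[of _ "-t"]) (simp add: adj1_def adj2_def)
  qed (use row1 in \<open>auto simp: adj1_def adj2_def\<close>)
qed

section \<open>Taylor coefficients of entire functions\<close>

definition taylor_coeff :: "complex \<Rightarrow> (complex \<Rightarrow> complex) \<Rightarrow> nat \<Rightarrow> complex" where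
  "taylor_coeff z0 f n = (deriv ^^ n) f z0 / fact n"

lemma taylor_coeff_0 [simp]: "taylor_coeff z0 f 0 = f z0"
  unfolding taylor_coeff_def by simp

lemma taylor_coeff_add:
  assumes "f holomorphic_on UNIV" "g holomorphic_on UNIV"
  shows "taylor_coeff z0 (\<lambda>x. f x + g x) n = taylor_coeff z0 f n + taylor_coeff z0 g n"
  unfolding taylor_coeff_def higher_deriv_add[OF assms open_UNIV UNIV_I] by (simp add: add_divide_distrib)

lemma taylor_coeff_diff:
  assumes "f holomorphic_on UNIV" "g holomorphic_on UNIV"
  shows "taylor_coeff z0 (\<lambda>x. f x - g x) n = taylor_coeff z0 f n - taylor_coeff z0 g n"
  unfolding taylor_coeff_def higher_deriv_diff[OF assms open_UNIV UNIV_I] by (simp add: diff_divide_distrib)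

lemma taylor_coeff_cmult:
  assumes "f holomorphic_on UNIV"
  shows "taylor_coeff z0 (\<lambda>x. a * f x) n = a * taylor_coeff z0 f n"
  unfolding taylor_coeff_def higher_deriv_cmult[OF assms UNIV_I open_UNIV] by simp

lemma taylor_coeff_mult:
  assumes "f holomorphic_on UNIV" "g holomorphic_on UNIV"
  shows "taylor_coeff z0 (\<lambda>x. f x * g x) n = (\<Sum>i\<le>n. taylor_coeff z0 f i * taylor_coeff z0 g (n - i))"
proof -
  have "taylor_coeff z0 (\<lambda>x. f x * g x) n
      = (\<Sum>i\<le>n. of_nat (n choose i) * (deriv ^^ i) f z0 * (deriv ^^ (n - i)) g z0 / fact n)"
    unfolding taylor_coeff_def higher_deriv_mult[OF assms open_UNIV UNIV_I]
    by (simp add: sum_divide_distrib atLeast0AtMost)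
  also have "\<dots> = (\<Sum>i\<le>n. taylor_coeff z0 f i * taylor_coeff z0 g (n - i))"
  proof (rule sum.cong[OF refl])
    fix i assume "i \<in> {..n}"
    then have "(of_nat (n choose i) :: complex) = fact n / (fact i * fact (n - i))"
      by (simp add: binomial_fact)
    then show "of_nat (n choose i) * (deriv ^^ i) f z0 * (deriv ^^ (n - i)) g z0 / fact n
        = taylor_coeff z0 f i * taylor_coeff z0 g (n - i)"
      unfolding taylor_coeff_def by (simp add: field_simps)
  qed
  finally show ?thesis .
qed

lemma taylor_coeff_times_id:
  assumes "f holomorphic_on UNIV"
  shows "taylor_coeff z0 (\<lambda>x. x * f x) n
    = z0 * taylor_coeff z0 f n + (if n = 0 then 0 else taylor_coeff z0 f (n - 1))"
proof (cases n)
  case (Suc m)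
  have id: "taylor_coeff z0 (\<lambda>x. x) (Suc i) = (if i = 0 then 1 else 0)" for i
    unfolding taylor_coeff_def higher_deriv_ident by simp
  have "taylor_coeff z0 (\<lambda>x. x * f x) n = (\<Sum>i\<le>Suc m. taylor_coeff z0 (\<lambda>x. x) i * taylor_coeff z0 f (Suc m - i))"
    unfolding Suc by (rule taylor_coeff_mult[OF holomorphic_on_ident assms])
  also have "\<dots> = z0 * taylor_coeff z0 f (Suc m) + (\<Sum>i\<le>m. if i = 0 then taylor_coeff z0 f m else 0)"
    unfolding sum.atMost_Suc_shift id by (simp add: if_distrib[of "\<lambda>x. x * _"] cong: if_cong)
  finally show ?thesis
    using Suc by simp
qed simp

lemma higher_deriv_exp: "(deriv ^^ n) exp = exp"
  by (induction n) (simp_all add: DERIV_imp_deriv[OF DERIV_exp])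

lemma taylor_coeff_exp_linear: "taylor_coeff z0 (\<lambda>x. exp (a * x)) n = a ^ n * exp (a * z0) / fact n"
  unfolding taylor_coeff_def
  using higher_deriv_compose_linear[OF holomorphic_on_exp open_UNIV open_UNIV UNIV_I, where u=a]
  by (simp add: higher_deriv_exp)

lemma zorder_eq_Least_taylor_coeff:
  assumes "f holomorphic_on UNIV" "\<exists>n. taylor_coeff z0 f n \<noteq> 0"
  shows "zorder f z0 = int (LEAST n. taylor_coeff z0 f n \<noteq> 0)"
proof (rule zorder_zero_eqI[OF assms(1) open_UNIV UNIV_I])
  show "(deriv ^^ i) f z0 = 0" if "i < nat (int (LEAST n. taylor_coeff z0 f n \<noteq> 0))" for i
    using that not_less_Least[of i "\<lambda>n. taylor_coeff z0 f n \<noteq> 0"] by (simp add: taylor_coeff_def)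
  show "(deriv ^^ nat (int (LEAST n. taylor_coeff z0 f n \<noteq> 0))) f z0 \<noteq> 0"
    using LeastI_ex[OF assms(2)] by (simp add: taylor_coeff_def)
qed simp

lemma taylor_coeff_nonzero_if_nonzero_somewhere:
  assumes "f holomorphic_on UNIV" "f b \<noteq> 0"
  shows "\<exists>n. taylor_coeff z0 f n \<noteq> 0"
  using holomorphic_fun_eq_0_on_connected[OF assms(1) open_UNIV connected_UNIV, of z0 b] assms(2)
  by (auto simp: taylor_coeff_def)

text \<open>\<open>exp_conv \<beta> n\<close> is the \<open>n\<close>-th coefficient of the Cauchy product of the exponential series
  with \<open>\<beta>\<close>.\<close>

definition exp_conv :: "(nat \<Rightarrow> complex) \<Rightarrow> nat \<Rightarrow> complex \<Rightarrow> complex" where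
  "exp_conv \<beta> n x = (\<Sum>i\<le>n. x ^ i / fact i * \<beta> (n - i))"

lemma exp_conv_at_0 [simp]: "exp_conv \<beta> n 0 = \<beta> n"
proof -
  have "exp_conv \<beta> n 0 = (\<Sum>i\<le>n. if i = 0 then \<beta> n else 0)"
    unfolding exp_conv_def by (rule sum.cong) auto
  then show ?thesis
    by simp
qed

lemma exp_conv_has_field_derivative:
  "(exp_conv \<beta> n has_field_derivative (if n = 0 then 0 else exp_conv \<beta> (n - 1) x)) (at x)"
proof (cases n)
  case 0
  have "exp_conv \<beta> 0 = (\<lambda>_. \<beta> 0)"
    by (simp add: exp_conv_def fun_eq_iff)
  with 0 show ?thesis
    by simp
next
  case (Suc m)
  have "((\<lambda>x. x ^ i / fact i * \<beta> (Suc m - i)) has_field_derivative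
      of_nat i * x ^ (i - 1) / fact i * \<beta> (Suc m - i)) (at x)" for i
    by (auto intro!: derivative_eq_intros)
  then have "(exp_conv \<beta> (Suc m) has_field_derivative
      (\<Sum>i\<le>Suc m. of_nat i * x ^ (i - 1) / fact i * \<beta> (Suc m - i))) (at x)"
    unfolding exp_conv_def[abs_def] by (rule DERIV_sum)
  also have "(\<Sum>i\<le>Suc m. of_nat i * x ^ (i - 1) / fact i * \<beta> (Suc m - i))
      = (\<Sum>i\<le>m. of_nat (Suc i) * x ^ i / fact (Suc i) * \<beta> (m - i))"
    unfolding sum.atMost_Suc_shift by simp
  also have "\<dots> = exp_conv \<beta> m x"
    unfolding exp_conv_def by (intro sum.cong refl) (simp del: of_nat_Suc add: divide_simps)
  finally show ?thesis
    using Suc by simp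
qed

lemma exp_times_exp_conv:
  assumes "f holomorphic_on UNIV"
  shows "exp (v * z0) * exp_conv (taylor_coeff z0 f) n v = taylor_coeff z0 (\<lambda>x. exp (v * x) * f x) n"
proof -
  have "(\<lambda>x. exp (v * x)) holomorphic_on UNIV"
    by (intro holomorphic_intros)
  from taylor_coeff_mult[OF this assms] show ?thesis
    unfolding taylor_coeff_exp_linear exp_conv_def sum_distrib_left
    by (simp add: algebra_simps)
qed

definition chain_fun :: "complex \<Rightarrow> (nat \<Rightarrow> complex) \<Rightarrow> nat \<Rightarrow> real \<Rightarrow> complex" where
  "chain_fun z0 \<beta> n v = (if v \<in> {-1..1} then exp (z0 * of_real v) * exp_conv \<beta> n (of_real v) else 0)"

lemma chain_fun_at_0 [simp]: "chain_fun z0 \<beta> n 0 = \<beta> n"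
  by (simp add: chain_fun_def)

lemma chain_fun_outside [simp]: "v \<notin> {-1..1} \<Longrightarrow> chain_fun z0 \<beta> n v = 0"
  unfolding chain_fun_def by auto

lemma chain_fun_has_vector_derivative:
  assumes v: "v \<in> {-1..1}"
  shows "(chain_fun z0 \<beta> n has_vector_derivative
      z0 * chain_fun z0 \<beta> n v + (if n = 0 then 0 else chain_fun z0 \<beta> (n - 1) v)) (at v within {-1..1})"
proof -
  define D where "D = z0 * (exp (z0 * of_real v) * exp_conv \<beta> n (of_real v))
      + exp (z0 * of_real v) * (if n = 0 then 0 else exp_conv \<beta> (n - 1) (of_real v))"
  have "((\<lambda>x. exp (z0 * x) * exp_conv \<beta> n x) has_field_derivative D) (at (of_real v))"
    unfolding D_def by (auto intro!: derivative_eq_intros exp_conv_has_field_derivative simp: algebra_simps)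
  from has_vector_derivative_real_field[OF this]
  have "(chain_fun z0 \<beta> n has_vector_derivative D) (at v within {-1..1})"
    by (rule has_vector_derivative_transform[OF v, rotated]) (simp add: chain_fun_def)
  moreover have "D = z0 * chain_fun z0 \<beta> n v + (if n = 0 then 0 else chain_fun z0 \<beta> (n - 1) v)"
    using v by (simp add: D_def chain_fun_def)
  ultimately show ?thesis
    by simp
qed

lemma chain_fun_continuous_on: "continuous_on {-1..1} (chain_fun z0 \<beta> n)"
  using continuous_on_if_has_vector_derivative[OF chain_fun_has_vector_derivative] .

lemma chain_fun_C1_on: "C1_on (chain_fun z0 \<beta> n)"
proof (rule C1_onI)
  show "continuous_on {-1..1}
      (\<lambda>v. z0 * chain_fun z0 \<beta> n v + (if n = 0 then 0 else chain_fun z0 \<beta> (n - 1) v))"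
    by (cases "n = 0") (simp_all add: continuous_intros chain_fun_continuous_on)
qed (rule chain_fun_has_vector_derivative)

lemma dI_chain_fun:
  assumes "v \<in> {-1..1}"
  shows "dI (chain_fun z0 \<beta> n) v = z0 * chain_fun z0 \<beta> n v + (if n = 0 then 0 else chain_fun z0 \<beta> (n - 1) v)"
  by (rule dI_eqI[OF assms chain_fun_has_vector_derivative[OF assms]])

lemma chain_fun_residual:
  "(\<lambda>v. z0 * chain_fun z0 \<beta> n v - dI (chain_fun z0 \<beta> n) v)
    = (\<lambda>v. - (if n = 0 then 0 else chain_fun z0 \<beta> (n - 1) v))"
proof
  fix v
  show "z0 * chain_fun z0 \<beta> n v - dI (chain_fun z0 \<beta> n) v = - (if n = 0 then 0 else chain_fun z0 \<beta> (n - 1) v)"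
    using dI_chain_fun[of v z0 \<beta> n] by (cases "v \<in> {-1..1}") (auto simp: dI_def)
qed

section \<open>Jordan chains at a zero of the determinant\<close>

lemma M_holomorphic:
  "M11 \<kappa> w c holomorphic_on UNIV" "M12 \<kappa> w c holomorphic_on UNIV"
  "M21 \<kappa> w c holomorphic_on UNIV" "M22 \<kappa> w c holomorphic_on UNIV"
  unfolding M11_def[abs_def] M12_def[abs_def] M21_def[abs_def] M22_def[abs_def]
  by (intro holomorphic_intros)+

lemma detM_holomorphic: "detM \<kappa> w c holomorphic_on UNIV"
  unfolding detM_eq_entries[abs_def] by (intro holomorphic_intros M_holomorphic)

lemma adj_holomorphic:
  "adj1 \<kappa> w c e1 e2 holomorphic_on UNIV" "adj2 \<kappa> w c e1 e2 holomorphic_on UNIV"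
  unfolding adj1_def[abs_def] adj2_def[abs_def] by (intro holomorphic_intros M_holomorphic)+

lemma taylor_coeff_row:
  assumes F: "F holomorphic_on UNIV" and G: "G holomorphic_on UNIV"
  shows "taylor_coeff z0 (\<lambda>x. (C * x\<^sup>2 + \<alpha>) * F x - (\<beta> * exp x + \<gamma> * exp (- x)) * G x) n
    = C * taylor_coeff z0 (\<lambda>x. x * (x * F x)) n + \<alpha> * taylor_coeff z0 F n
      - \<beta> * taylor_coeff z0 (\<lambda>x. exp x * G x) n - \<gamma> * taylor_coeff z0 (\<lambda>x. exp (- x) * G x) n"
proof -
  define X1 X2 X3 where "X1 x = x * (x * F x)" and "X2 x = exp x * G x" and "X3 x = exp (- x) * G x" for x
  have h: "X1 holomorphic_on UNIV" "X2 holomorphic_on UNIV" "X3 holomorphic_on UNIV"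
    unfolding X1_def[abs_def] X2_def[abs_def] X3_def[abs_def] using F G by (auto intro!: holomorphic_intros)
  have h': "(\<lambda>x. C * X1 x) holomorphic_on UNIV" "(\<lambda>x. \<alpha> * F x) holomorphic_on UNIV"
    "(\<lambda>x. \<beta> * X2 x) holomorphic_on UNIV" "(\<lambda>x. \<gamma> * X3 x) holomorphic_on UNIV"
    using h F by (auto intro!: holomorphic_intros)
  have h'': "(\<lambda>x. C * X1 x + \<alpha> * F x) holomorphic_on UNIV"
    "(\<lambda>x. C * X1 x + \<alpha> * F x - \<beta> * X2 x) holomorphic_on UNIV"
    using h' by (auto intro!: holomorphic_intros)
  have row: "(\<lambda>x. (C * x\<^sup>2 + \<alpha>) * F x - (\<beta> * exp x + \<gamma> * exp (- x)) * G x)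
      = (\<lambda>x. C * X1 x + \<alpha> * F x - \<beta> * X2 x - \<gamma> * X3 x)"
    by (simp add: fun_eq_iff X1_def X2_def X3_def power2_eq_square algebra_simps)
  show ?thesis
    unfolding row taylor_coeff_diff[OF h''(2) h'(4)] taylor_coeff_diff[OF h''(1) h'(3)]
      taylor_coeff_add[OF h'(1,2)] taylor_coeff_cmult[OF h(1)] taylor_coeff_cmult[OF h(2)]
      taylor_coeff_cmult[OF h(3)] taylor_coeff_cmult[OF F]
    by (simp add: X1_def[abs_def] X2_def[abs_def] X3_def[abs_def])
qed

locale detM_root =
  fixes \<kappa> w c :: real and z0 e1 e2 :: complex
  assumes c_nonzero: "c \<noteq> 0"
    and detM_z0: "detM \<kappa> w c z0 = 0"
    and adj_nonzero: "adj1 \<kappa> w c e1 e2 z0 \<noteq> 0 \<or> adj2 \<kappa> w c e1 e2 z0 \<noteq> 0"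
    and adj_spans: "\<And>x y. M11 \<kappa> w c z0 * x + M12 \<kappa> w c z0 * y = 0 \<Longrightarrow> M21 \<kappa> w c z0 * x + M22 \<kappa> w c z0 * y = 0 \<Longrightarrow>
        \<exists>t. x = t * adj1 \<kappa> w c e1 e2 z0 \<and> y = t * adj2 \<kappa> w c e1 e2 z0"
    and detM_finite_order: "\<exists>n. taylor_coeff z0 (detM \<kappa> w c) n \<noteq> 0"
begin

abbreviation "A1 \<equiv> adj1 \<kappa> w c e1 e2"

abbreviation "A2 \<equiv> adj2 \<kappa> w c e1 e2"

text \<open>\<open>chain n\<close> is the \<open>n\<close>-th Taylor coefficient at \<open>z0\<close> of \<open>\<lambda> \<mapsto> \<Phi>(\<lambda>)\<close>, where \<open>\<Phi>(\<lambda>)\<close> is built by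
  variation of constants from \<open>A(\<lambda>)\<close> and satisfies \<open>(\<lambda> - L) \<Phi>(\<lambda>) = det M(\<lambda>) \<cdot> defect 1\<close>;
  Leibniz' rule then gives \<open>zmL_chain\<close>.\<close>

definition chain :: "nat \<Rightarrow> st" where
  "chain n = \<lparr>p1 = taylor_coeff z0 A1 n, p2 = taylor_coeff z0 A2 n,
     xi1 = taylor_coeff z0 (\<lambda>x. x * A1 x) n, xi2 = taylor_coeff z0 (\<lambda>x. x * A2 x) n,
     P1 = chain_fun z0 (taylor_coeff z0 A1) n, P2 = chain_fun z0 (taylor_coeff z0 A2) n\<rparr>"

definition defect :: "complex \<Rightarrow> st" where
  "defect t = \<lparr>p1 = 0, p2 = 0, xi1 = t * e1 / (of_real c)\<^sup>2, xi2 = t * e2 / (of_real c)\<^sup>2,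
     P1 = (\<lambda>_. 0), P2 = (\<lambda>_. 0)\<rparr>"

lemma chain_in_Dsp: "chain n \<in> Dsp"
  unfolding Dsp_def Xsp_def chain_def by (simp add: chain_fun_C1_on chain_fun_continuous_on)

lemma chain_boundary:
  "P1 (chain n) 1 = taylor_coeff z0 (\<lambda>x. exp x * A1 x) n"
  "P1 (chain n) (-1) = taylor_coeff z0 (\<lambda>x. exp (- x) * A1 x) n"
  "P2 (chain n) 1 = taylor_coeff z0 (\<lambda>x. exp x * A2 x) n"
  "P2 (chain n) (-1) = taylor_coeff z0 (\<lambda>x. exp (- x) * A2 x) n"
  using exp_times_exp_conv[OF adj_holomorphic(1), of 1] exp_times_exp_conv[OF adj_holomorphic(1), of "-1"]
    exp_times_exp_conv[OF adj_holomorphic(2), of 1] exp_times_exp_conv[OF adj_holomorphic(2), of "-1"]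
  by (simp_all add: chain_def chain_fun_def)

lemma row_identities:
  "(of_real c)\<^sup>2 * taylor_coeff z0 (\<lambda>x. x * (x * A1 x)) n + (1 + of_real \<kappa>) * taylor_coeff z0 A1 n
     - taylor_coeff z0 (\<lambda>x. exp x * A2 x) n - of_real \<kappa> * taylor_coeff z0 (\<lambda>x. exp (- x) * A2 x) n
   = e1 * taylor_coeff z0 (detM \<kappa> w c) n"
  "(of_real c)\<^sup>2 * taylor_coeff z0 (\<lambda>x. x * (x * A2 x)) n + of_real w * (1 + of_real \<kappa>) * taylor_coeff z0 A2 n
     - of_real w * of_real \<kappa> * taylor_coeff z0 (\<lambda>x. exp x * A1 x) n
     - of_real w * taylor_coeff z0 (\<lambda>x. exp (- x) * A1 x) n
   = e2 * taylor_coeff z0 (detM \<kappa> w c) n"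
proof -
  have "(\<lambda>x. e1 * detM \<kappa> w c x)
      = (\<lambda>x. ((of_real c)\<^sup>2 * x\<^sup>2 + (1 + of_real \<kappa>)) * A1 x - (1 * exp x + of_real \<kappa> * exp (- x)) * A2 x)"
    "(\<lambda>x. e2 * detM \<kappa> w c x)
      = (\<lambda>x. ((of_real c)\<^sup>2 * x\<^sup>2 + of_real w * (1 + of_real \<kappa>)) * A2 x
           - (of_real w * of_real \<kappa> * exp x + of_real w * exp (- x)) * A1 x)"
    using M_adj[of \<kappa> w c _ e1 e2]
    by (auto simp: fun_eq_iff M11_def M12_def M21_def M22_def algebra_simps)
  from arg_cong[OF this(1), of "\<lambda>f. taylor_coeff z0 f n"] arg_cong[OF this(2), of "\<lambda>f. taylor_coeff z0 f n"]
  show "(of_real c)\<^sup>2 * taylor_coeff z0 (\<lambda>x. x * (x * A1 x)) n + (1 + of_real \<kappa>) * taylor_coeff z0 A1 n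
     - taylor_coeff z0 (\<lambda>x. exp x * A2 x) n - of_real \<kappa> * taylor_coeff z0 (\<lambda>x. exp (- x) * A2 x) n
   = e1 * taylor_coeff z0 (detM \<kappa> w c) n"
    "(of_real c)\<^sup>2 * taylor_coeff z0 (\<lambda>x. x * (x * A2 x)) n + of_real w * (1 + of_real \<kappa>) * taylor_coeff z0 A2 n
     - of_real w * of_real \<kappa> * taylor_coeff z0 (\<lambda>x. exp x * A1 x) n
     - of_real w * taylor_coeff z0 (\<lambda>x. exp (- x) * A1 x) n
   = e2 * taylor_coeff z0 (detM \<kappa> w c) n"
    unfolding taylor_coeff_row[OF adj_holomorphic(1,2)] taylor_coeff_row[OF adj_holomorphic(2,1)]
      taylor_coeff_cmult[OF detM_holomorphic] by simp_all
qed

lemma zmL_chain: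
  "zmL z0 \<kappa> w c (chain n)
    = stadd (stscale (-1) (if n = 0 then stzero else chain (n - 1))) (defect (taylor_coeff z0 (detM \<kappa> w c) n))"
proof (rule st_eqI)
  let ?prev = "if n = 0 then stzero else chain (n - 1)"
  define D where "D = taylor_coeff z0 (detM \<kappa> w c) n"
  have c2: "(of_real c :: complex)\<^sup>2 \<noteq> 0"
    using c_nonzero by simp
  have "(\<lambda>x. x * A1 x) holomorphic_on UNIV" "(\<lambda>x. x * A2 x) holomorphic_on UNIV"
    by (intro holomorphic_intros adj_holomorphic)+
  note shift = taylor_coeff_times_id[OF adj_holomorphic(1)] taylor_coeff_times_id[OF adj_holomorphic(2)]
    taylor_coeff_times_id[OF this(1)] taylor_coeff_times_id[OF this(2)]
  show "p1 (zmL z0 \<kappa> w c (chain n)) = p1 (stadd (stscale (-1) ?prev) (defect D))"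
    "p2 (zmL z0 \<kappa> w c (chain n)) = p2 (stadd (stscale (-1) ?prev) (defect D))"
    by (simp_all add: zmL_components chain_def defect_def stadd_def stscale_def stzero_def shift(1,2))
  show "xi1 (zmL z0 \<kappa> w c (chain n)) = xi1 (stadd (stscale (-1) ?prev) (defect D))"
    using row_identities(1)[of n, folded D_def] c2
    unfolding zmL_components chain_boundary shift(3)
    by (simp add: chain_def defect_def stadd_def stscale_def stzero_def field_simps
        if_distrib[of xi1] cong: if_cong split del: if_split)
  show "xi2 (zmL z0 \<kappa> w c (chain n)) = xi2 (stadd (stscale (-1) ?prev) (defect D))"
    using row_identities(2)[of n, folded D_def] c2
    unfolding zmL_components chain_boundary shift(4)
    by (simp add: chain_def defect_def stadd_def stscale_def stzero_def field_simps
        if_distrib[of xi2] cong: if_cong split del: if_split)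
  show "P1 (zmL z0 \<kappa> w c (chain n)) = P1 (stadd (stscale (-1) ?prev) (defect D))"
    "P2 (zmL z0 \<kappa> w c (chain n)) = P2 (stadd (stscale (-1) ?prev) (defect D))"
    by (auto simp: fun_eq_iff zmL_components chain_def defect_def stadd_def stscale_def stzero_def
        chain_fun_residual)
qed

definition root_order :: nat where
  "root_order = (LEAST n. taylor_coeff z0 (detM \<kappa> w c) n \<noteq> 0)"

lemma taylor_coeff_root_order: "taylor_coeff z0 (detM \<kappa> w c) root_order \<noteq> 0"
  unfolding root_order_def using detM_finite_order by (rule LeastI_ex)

lemma taylor_coeff_below_root_order: "k < root_order \<Longrightarrow> taylor_coeff z0 (detM \<kappa> w c) k = 0"
  unfolding root_order_def using not_less_Least by blast

lemma root_order_pos: "0 < root_order"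
  using taylor_coeff_root_order detM_z0 by (cases root_order) auto

lemma zorder_detM: "zorder (detM \<kappa> w c) z0 = int root_order"
  unfolding root_order_def by (rule zorder_eq_Least_taylor_coeff[OF detM_holomorphic detM_finite_order])

lemma defect_0: "defect 0 = stzero"
  by (simp add: defect_def stzero_def)

lemma zmL_chain_below_root_order:
  "n < root_order \<Longrightarrow> zmL z0 \<kappa> w c (chain n) = stscale (-1) (if n = 0 then stzero else chain (n - 1))"
  using zmL_chain[of n] taylor_coeff_below_root_order[of n] by (simp add: defect_0 stadd_stzero)

lemma chain_in_kerpow: "n < root_order \<Longrightarrow> chain n \<in> kerpow \<kappa> w c z0 (Suc n)"
proof (induction n)
  case 0
  then show ?case
    using chain_in_Dsp zmL_chain_below_root_order[of 0] by (simp add: stscale_def stzero_def)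
next
  case (Suc n)
  then have "stscale (-1) (chain n) \<in> kerpow \<kappa> w c z0 (Suc n)"
    by (intro kerpow_stscale) simp
  then show ?case
    using chain_in_Dsp zmL_chain_below_root_order[OF Suc.prems] by simp
qed

text \<open>\<open>defect s\<close> lies in the range of \<open>z0 - L\<close> only for \<open>s = 0\<close>: otherwise \<open>A(z0)\<close>, which is
  \<open>adj M(z0)\<close> applied to the right-hand side, would vanish.\<close>

lemma defect_in_range_imp_zero:
  assumes W: "W \<in> Dsp" and zW: "zmL z0 \<kappa> w c W = defect s"
  shows "s = 0"
proof -
  have c2: "(of_real c :: complex)\<^sup>2 \<noteq> 0"
    using c_nonzero by simp
  have "M11 \<kappa> w c z0 * p1 W + M12 \<kappa> w c z0 * p2 W = s * e1"
    "M21 \<kappa> w c z0 * p1 W + M22 \<kappa> w c z0 * p2 W = s * e2"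
    using vc_state_of_Dsp(2,3)[OF W c_nonzero, where z=z0 and \<kappa>=\<kappa> and w=w] c2
    unfolding zW by (simp_all add: rhsA_def rhsB_def defect_def)
  from adjugate_2x2[OF this]
  have "s * A1 z0 = detM \<kappa> w c z0 * p1 W" "s * A2 z0 = detM \<kappa> w c z0 * p2 W"
    unfolding adj1_def adj2_def detM_eq_entries by (simp_all add: algebra_simps)
  then show "s = 0"
    using adj_nonzero detM_z0 by auto
qed

lemma kernel_eq_span_chain_0:
  assumes W: "W \<in> Dsp" and zW: "zmL z0 \<kappa> w c W = stzero"
  shows "\<exists>t. W = stscale t (chain 0)"
proof -
  note W_eq = vc_state_of_Dsp[OF W c_nonzero, where z=z0 and \<kappa>=\<kappa> and w=w, unfolded zW]
  obtain t where t: "p1 W = t * A1 z0" "p2 W = t * A2 z0"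
    using adj_spans[of "p1 W" "p2 W"] W_eq(2,3) by (auto simp: rhsA_def rhsB_def stzero_def)
  have "vc_state z0 (p1 W) (p2 W) stzero = stscale t (chain 0)"
    by (rule st_eqI) (auto simp: vc_state_def stscale_def chain_def stzero_def t fun_eq_iff
        vc_fun_def chain_fun_def exp_conv_def)
  with W_eq(1) show ?thesis
    by auto
qed

lemma zmL_lincomb_chain:
  "zmL z0 \<kappa> w c (lincomb \<beta> chain root_order)
    = lincomb (\<lambda>j. if Suc j < root_order then - \<beta> (Suc j) else 0) chain root_order"
proof (rule st_eq_coordsI)
  fix \<phi> assume \<phi>: "\<phi> \<in> coords"
  obtain m where m: "root_order = Suc m"
    using root_order_pos by (cases root_order) auto
  have "\<phi> (zmL z0 \<kappa> w c (lincomb \<beta> chain root_order)) = (\<Sum>i<root_order. \<beta> i * \<phi> (zmL z0 \<kappa> w c (chain i)))"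
    unfolding zmL_lincomb[OF chain_in_Dsp] coords_lincomb[OF \<phi>] ..
  also have "\<dots> = (\<Sum>i<m. - \<beta> (Suc i) * \<phi> (chain i))"
    unfolding m sum.lessThan_Suc_shift
    using zmL_chain_below_root_order coords_linear[OF \<phi>] m by simp
  also have "\<dots> = \<phi> (lincomb (\<lambda>j. if Suc j < root_order then - \<beta> (Suc j) else 0) chain root_order)"
    unfolding coords_lincomb[OF \<phi>] m by simp
  finally show "\<phi> (zmL z0 \<kappa> w c (lincomb \<beta> chain root_order))
      = \<phi> (lincomb (\<lambda>j. if Suc j < root_order then - \<beta> (Suc j) else 0) chain root_order)" .
qed

lemma lincomb_chain_zero_shift:
  assumes "lincomb \<beta> chain root_order = stzero"
  shows "lincomb (\<lambda>j. if Suc j < root_order then - \<beta> (Suc j) else 0) chain root_order = stzero"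
proof -
  have "lincomb (\<lambda>j. if Suc j < root_order then - \<beta> (Suc j) else 0) chain root_order
      = zmL z0 \<kappa> w c (lincomb \<beta> chain root_order)"
    by (rule zmL_lincomb_chain[symmetric])
  also have "\<dots> = stzero"
    unfolding assms by (rule zmL_stzero)
  finally show ?thesis .
qed

lemma lincomb_chain_zero_base:
  assumes zero: "lincomb \<beta> chain root_order = stzero"
    and upper: "\<And>j. 0 < j \<Longrightarrow> j < root_order \<Longrightarrow> \<beta> j = 0"
  shows "\<beta> 0 = 0"
proof -
  have "(\<Sum>j<root_order. \<beta> j * X j) = \<beta> 0 * X 0" for X :: "nat \<Rightarrow> complex"
  proof -
    have "(\<Sum>j<root_order. \<beta> j * X j) = \<beta> 0 * X 0 + (\<Sum>j\<in>{..<root_order} - {0}. \<beta> j * X j)"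
      using root_order_pos by (simp add: sum.remove)
    also have "(\<Sum>j\<in>{..<root_order} - {0}. \<beta> j * X j) = 0"
      using upper by (intro sum.neutral) auto
    finally show ?thesis
      by simp
  qed
  then have "\<beta> 0 * A1 z0 = 0" "\<beta> 0 * A2 z0 = 0"
    using arg_cong[OF zero, of p1] arg_cong[OF zero, of p2]
    unfolding coords_lincomb[OF in_coords(1)] coords_lincomb[OF in_coords(2)]
    by (simp_all add: chain_def stzero_def)
  then show ?thesis
    using adj_nonzero by auto
qed

text \<open>Induction on a bound \<open>r\<close> for the support of \<open>\<beta>\<close>: \<open>z0 - L\<close> shifts the coefficients down by one.\<close>

lemma chain_independent:
  assumes "lincomb \<beta> chain root_order = stzero" "i < root_order"
  shows "\<beta> i = 0"
proof -
  have "\<forall>j<root_order. \<beta> j = 0"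
    if "\<forall>j. r \<le> j \<longrightarrow> j < root_order \<longrightarrow> \<beta> j = 0" "lincomb \<beta> chain root_order = stzero" for r \<beta>
    using that
  proof (induction r arbitrary: \<beta>)
    case (Suc r)
    define \<beta>' where "\<beta>' j = (if Suc j < root_order then - \<beta> (Suc j) else 0)" for j
    have "\<forall>j. r \<le> j \<longrightarrow> j < root_order \<longrightarrow> \<beta>' j = 0"
      using Suc.prems(1) by (auto simp: \<beta>'_def)
    moreover have "lincomb \<beta>' chain root_order = stzero"
      unfolding \<beta>'_def by (rule lincomb_chain_zero_shift[OF Suc.prems(2)])
    ultimately have shifted: "\<forall>j<root_order. \<beta>' j = 0"
      by (rule Suc.IH)
    have upper: "\<beta> j = 0" if j0: "0 < j" and jm: "j < root_order" for j
    proof -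
      obtain i where j: "j = Suc i"
        using j0 gr0_implies_Suc by blast
      with jm have "\<beta>' i = 0"
        using shifted by simp
      with jm show ?thesis
        unfolding j \<beta>'_def by simp
    qed
    with lincomb_chain_zero_base[OF Suc.prems(2)] show ?case
      by (metis gr0I)
  qed simp
  from this[of root_order \<beta>] assms show ?thesis
    by simp
qed

lemma coords_defect: "\<phi> \<in> coords \<Longrightarrow> \<phi> (defect (a * b)) = a * \<phi> (defect b)"
  unfolding coords_def by (auto simp: defect_def)

definition lift :: "(nat \<Rightarrow> complex) \<Rightarrow> st" where
  "lift \<beta> = lincomb (\<lambda>j. if j = 0 then 0 else - \<beta> (j - 1)) chain root_order"

text \<open>If \<open>(z0 - L) U = \<Sum>\<^sub>j \<beta>\<^sub>j chain j\<close>, then \<open>U - lift \<beta>\<close> is mapped to \<open>\<beta>\<^sub>m\<^sub>-\<^sub>1 chain (m - 1)\<close>;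
  adding \<open>\<beta>\<^sub>m\<^sub>-\<^sub>1 chain m\<close> leaves a multiple of \<open>defect 1\<close>.\<close>

lemma zmL_lift_correction:
  assumes U: "U \<in> Dsp" and \<beta>: "zmL z0 \<kappa> w c U = lincomb \<beta> chain root_order"
  defines "W \<equiv> stadd U (stadd (stscale (-1) (lift \<beta>)) (stscale (\<beta> (root_order - 1)) (chain root_order)))"
  shows "W \<in> Dsp"
    and "zmL z0 \<kappa> w c W = defect (\<beta> (root_order - 1) * taylor_coeff z0 (detM \<kappa> w c) root_order)"
proof -
  obtain m where m: "root_order = Suc m"
    using root_order_pos gr0_implies_Suc by blast
  have V: "lift \<beta> \<in> Dsp"
    unfolding lift_def by (rule lincomb_in_Dsp[OF chain_in_Dsp])
  then show W: "W \<in> Dsp"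
    unfolding W_def by (intro stadd_in_Dsp stscale_in_Dsp U chain_in_Dsp)
  show "zmL z0 \<kappa> w c W = defect (\<beta> (root_order - 1) * taylor_coeff z0 (detM \<kappa> w c) root_order)"
  proof (rule st_eq_coordsI)
    fix \<phi> assume \<phi>: "\<phi> \<in> coords"
    have "\<phi> (zmL z0 \<kappa> w c W) = \<phi> (zmL z0 \<kappa> w c U) - \<phi> (zmL z0 \<kappa> w c (lift \<beta>))
        + \<beta> m * \<phi> (zmL z0 \<kappa> w c (chain root_order))"
      unfolding W_def m using U V chain_in_Dsp
      by (simp add: zmL_stadd zmL_stscale stadd_in_Dsp stscale_in_Dsp coords_linear[OF \<phi>])
    also have "\<phi> (zmL z0 \<kappa> w c (lift \<beta>)) = (\<Sum>j<root_order. (if Suc j < root_order then \<beta> j else 0) * \<phi> (chain j))"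
      unfolding lift_def zmL_lincomb_chain coords_lincomb[OF \<phi>] by (rule sum.cong) auto
    also have "\<phi> (zmL z0 \<kappa> w c (chain root_order)) = - \<phi> (chain m) + \<phi> (defect (taylor_coeff z0 (detM \<kappa> w c) root_order))"
      unfolding zmL_chain m using coords_linear[OF \<phi>] by simp
    also have "\<phi> (zmL z0 \<kappa> w c U) = (\<Sum>j<root_order. \<beta> j * \<phi> (chain j))"
      unfolding \<beta> coords_lincomb[OF \<phi>] ..
    finally show "\<phi> (zmL z0 \<kappa> w c W) = \<phi> (defect (\<beta> (root_order - 1) * taylor_coeff z0 (detM \<kappa> w c) root_order))"
      unfolding coords_defect[OF \<phi>] m by (simp add: algebra_simps)
  qed
qed

lemma kerpow_in_span_chain: "U \<in> kerpow \<kappa> w c z0 k \<Longrightarrow> \<exists>\<beta>. U = lincomb \<beta> chain root_order"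
proof (induction k arbitrary: U)
  case 0
  then show ?case
    using lincomb_zero by (metis kerpow.simps(1) singletonD)
next
  case (Suc k)
  then have U: "U \<in> Dsp" and zU: "zmL z0 \<kappa> w c U \<in> kerpow \<kappa> w c z0 k"
    by auto
  obtain \<beta> where \<beta>: "zmL z0 \<kappa> w c U = lincomb \<beta> chain root_order"
    using Suc.IH[OF zU] by blast
  define W where "W = stadd U (stadd (stscale (-1) (lift \<beta>)) (stscale (\<beta> (root_order - 1)) (chain root_order)))"
  note W = zmL_lift_correction[OF U \<beta>, folded W_def]
  have "\<beta> (root_order - 1) * taylor_coeff z0 (detM \<kappa> w c) root_order = 0"
    by (rule defect_in_range_imp_zero[OF W])
  then have top: "\<beta> (root_order - 1) = 0"
    using taylor_coeff_root_order by simp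
  then obtain t where t: "W = stscale t (chain 0)"
    using kernel_eq_span_chain_0[OF W(1)] W(2) defect_0 by auto
  have "U = lincomb (\<lambda>j. (if j = 0 then t else - \<beta> (j - 1))) chain root_order"
  proof (rule st_eq_coordsI)
    fix \<phi> assume \<phi>: "\<phi> \<in> coords"
    have "\<phi> U = \<phi> W + \<phi> (lift \<beta>)"
      using arg_cong[OF W_def, of \<phi>] top by (simp add: coords_linear[OF \<phi>])
    also have "\<dots> = (\<Sum>j<root_order. (if j = 0 then t else - \<beta> (j - 1)) * \<phi> (chain j))"
      unfolding t lift_def coords_linear[OF \<phi>] coords_lincomb[OF \<phi>] using root_order_pos
      by (simp add: sum.remove[of _ 0] if_distrib[of "\<lambda>x. x * _"] cong: if_cong)
    finally show "\<phi> U = \<phi> (lincomb (\<lambda>j. (if j = 0 then t else - \<beta> (j - 1))) chain root_order)"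
      unfolding coords_lincomb[OF \<phi>] .
  qed
  then show ?case
    by blast
qed

lemma has_dim_gen_eigenspace: "has_dim (gen_eigenspace \<kappa> w c z0) root_order"
  unfolding has_dim_def gen_eigenspace_def
proof (intro exI[of _ chain] conjI allI impI ballI)
  show "chain i \<in> (\<Union>k. kerpow \<kappa> w c z0 k)" if "i < root_order" for i
    using chain_in_kerpow[OF that] by blast
  show "a i = 0" if "lincomb a chain root_order = stzero" "i < root_order" for a i
    using chain_independent[OF that] .
  show "\<exists>a. U = lincomb a chain root_order" if "U \<in> (\<Union>k. kerpow \<kappa> w c z0 k)" for U
    using that kerpow_in_span_chain by blast
qed

lemma has_dim_eigenspace: "has_dim (kerpow \<kappa> w c z0 1) 1"
  unfolding has_dim_def
proof (intro exI[of _ chain] conjI allI impI ballI)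
  show "chain i \<in> kerpow \<kappa> w c z0 1" if "i < 1" for i
    using that chain_in_kerpow[OF root_order_pos] by simp
  show "a i = 0" if "lincomb a chain 1 = stzero" "i < 1" for a i
  proof -
    have "a 0 * A1 z0 = 0" "a 0 * A2 z0 = 0"
      using arg_cong[OF that(1), of p1] arg_cong[OF that(1), of p2]
      by (simp_all add: coords_lincomb in_coords chain_def stzero_def)
    then show ?thesis
      using that(2) adj_nonzero by auto
  qed
  show "\<exists>a. U = lincomb a chain 1" if U: "U \<in> kerpow \<kappa> w c z0 1" for U
  proof -
    obtain t where "U = stscale t (chain 0)"
      using U kernel_eq_span_chain_0 by auto
    moreover have "stscale t (chain 0) = lincomb (\<lambda>_. t) chain 1"
      by (rule st_eq_coordsI) (simp add: coords_lincomb coords_linear)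
    ultimately show ?thesis
      by blast
  qed
qed

end

section \<open>Properties of the spectrum\<close>

lemma detM_at_imaginary_period:
  fixes N :: nat and \<kappa> w c :: real
  defines "X \<equiv> c\<^sup>2 * (2 * real N * pi)\<^sup>2"
  shows "detM \<kappa> w c (complex_of_real (2 * real N * pi) * \<i>) = complex_of_real (X * (X - (1 + \<kappa>) * (1 + w)))"
proof -
  define b where "b = complex_of_real (2 * real N * pi) * \<i>"
  have "exp b = 1"
    unfolding b_def by (rule exp_integer_2pi) simp
  then have e: "exp b = 1" "exp (- b) = 1"
    by (simp_all add: exp_minus)
  have b2: "b\<^sup>2 = - complex_of_real ((2 * real N * pi)\<^sup>2)"
    unfolding b_def by (simp add: power_mult_distrib)
  show ?thesis
    unfolding b_def[symmetric] detM_eq_entries M11_def M12_def M21_def M22_def e b2 X_def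
    by (simp add: algebra_simps power2_eq_square)
qed

lemma detM_not_identically_zero:
  assumes \<kappa>: "\<kappa> > 0" and w: "w > 0" and c: "c \<noteq> 0"
  obtains b where "detM \<kappa> w c b \<noteq> 0"
proof -
  define K where "K = (1 + \<kappa>) * (1 + w)"
  have K: "K > 0" and c2: "c\<^sup>2 > 0"
    unfolding K_def using \<kappa> w c by simp_all
  obtain N :: nat where N: "K / c\<^sup>2 < real N"
    using reals_Archimedean2 by blast
  moreover have "0 < K / c\<^sup>2"
    using K c2 by simp
  ultimately have N1: "1 \<le> real N"
    by simp
  define X where "X = c\<^sup>2 * (2 * real N * pi)\<^sup>2"
  have "1 * 1 \<le> pi * pi"
    using pi_gt3 by (intro mult_mono) auto
  then have "1 * 1 \<le> pi * pi * real N"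
    using N1 by (intro mult_mono) auto
  then have "real N \<le> (2 * real N * pi)\<^sup>2"
    using N1 by (simp add: power2_eq_square mult_le_cancel_left1 algebra_simps)
  then have "real N * c\<^sup>2 \<le> X"
    unfolding X_def using c2 by (simp add: mult.commute mult_left_mono)
  moreover have "K < real N * c\<^sup>2"
    using N c2 by (simp add: field_simps)
  ultimately have "X * (X - K) \<noteq> 0"
    using K by simp
  then show ?thesis
    using that[of "complex_of_real (2 * real N * pi) * \<i>"]
    unfolding detM_at_imaginary_period X_def[symmetric] K_def[symmetric] by simp
qed

lemma zeros_detM_isolated:
  assumes "\<kappa> > 0" "w > 0" "c \<noteq> 0"
  shows "\<not> z islimpt {z. detM \<kappa> w c z = 0}"
proof
  assume limpt: "z islimpt {z. detM \<kappa> w c z = 0}"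
  have "closed {z. detM \<kappa> w c z = 0}"
    using continuous_closed_preimage_constant[OF holomorphic_on_imp_continuous_on[OF detM_holomorphic] closed_UNIV]
    by simp
  with limpt have "detM \<kappa> w c z = 0"
    by (simp add: closed_limpt)
  moreover obtain b where "detM \<kappa> w c b \<noteq> 0"
    using detM_not_identically_zero[OF assms] .
  ultimately obtain r where "0 < r" "\<And>x. x \<in> ball z r - {z} \<Longrightarrow> detM \<kappa> w c x \<noteq> 0"
    using isolated_zeros[OF detM_holomorphic open_UNIV connected_UNIV UNIV_I _ UNIV_I] by metis
  then show False
    using limpt unfolding islimpt_approachable by (fastforce simp: dist_commute)
qed

lemma detM_cnj: "detM \<kappa> w c (cnj z) = cnj (detM \<kappa> w c z)"
  unfolding detM_eq_entries M11_def M12_def M21_def M22_def by (simp add: exp_cnj)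

lemma detM_uminus: "detM \<kappa> w c (- z) = detM \<kappa> w c z"
  unfolding detM_closed_form by simp

lemma detM_root_exists:
  assumes \<kappa>: "\<kappa> > 0" and w: "w > 0" and c: "\<bar>c\<bar> > 1" and z: "detM \<kappa> w c z = 0"
  obtains e1 e2 where "detM_root \<kappa> w c z e1 e2"
proof -
  obtain e1 e2 where "adj1 \<kappa> w c e1 e2 z \<noteq> 0 \<or> adj2 \<kappa> w c e1 e2 z \<noteq> 0"
    and "\<And>x y. M11 \<kappa> w c z * x + M12 \<kappa> w c z * y = 0 \<Longrightarrow> M21 \<kappa> w c z * x + M22 \<kappa> w c z * y = 0 \<Longrightarrow>
      \<exists>t. x = t * adj1 \<kappa> w c e1 e2 z \<and> y = t * adj2 \<kappa> w c e1 e2 z"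
    using adj_spans_kernel[OF \<kappa> w c] by metis
  moreover have "c \<noteq> 0"
    using c by auto
  moreover obtain b where "detM \<kappa> w c b \<noteq> 0"
    using detM_not_identically_zero[OF \<kappa> w \<open>c \<noteq> 0\<close>] .
  ultimately have "detM_root \<kappa> w c z e1 e2"
    using z taylor_coeff_nonzero_if_nonzero_somewhere[OF detM_holomorphic] by unfold_locales blast+
  then show ?thesis ..
qed

lemma resolvent_formula:
  assumes c: "c \<noteq> 0" and z: "z \<in> resolvent_set \<kappa> w c" and U: "U \<in> Xsp"
  shows "let d = detM \<kappa> w c z; c2 = (of_real c)\<^sup>2; k = of_real \<kappa>; w' = of_real w;
               A = c2 * xi1 U + c2 * z * p1 U + Iz z (P2 U) 1 + k * Iz z (P2 U) (-1);
               B = c2 * xi2 U + c2 * z * p2 U + k * w' * Iz z (P1 U) 1 + w' * Iz z (P1 U) (-1);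
               R = Res \<kappa> w c z U
           in p1 R = (c2 * z\<^sup>2 + w' * (1 + k)) / d * A + (exp z + k * exp (- z)) / d * B
            \<and> p2 R = w' * (k * exp z + exp (- z)) / d * A + (c2 * z\<^sup>2 + 1 + k) / d * B
            \<and> xi1 R = z * p1 R - p1 U
            \<and> xi2 R = z * p2 R - p2 U
            \<and> (\<forall>v\<in>{-1..1}. P1 R v = exp (z * of_real v) * p1 R + Iz z (P1 U) v)
            \<and> (\<forall>v\<in>{-1..1}. P2 R v = exp (z * of_real v) * p2 R + Iz z (P2 U) v)"
  unfolding Let_def Res_eq_vc_state[OF c z U] rhsA_def[symmetric] rhsB_def[symmetric]
  by (simp add: vc_state_def vc_fun_def res_p1_def res_p2_def M11_def M12_def M21_def M22_def
      divide_inverse algebra_simps)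

lemma algebraic_multiplicity_eq_zorder:
  assumes "\<kappa> > 0" "w > 0" "\<bar>c\<bar> > 1" "eigenvalue_L \<kappa> w c z"
  shows "\<exists>n. algebraic_multiplicity_is \<kappa> w c z n \<and> int n = zorder (detM \<kappa> w c) z"
proof -
  have "detM \<kappa> w c z = 0"
    using assms eigenvalue_L_iff_detM_zero[of c \<kappa> w z] by auto
  then obtain e1 e2 where "detM_root \<kappa> w c z e1 e2"
    using detM_root_exists[OF assms(1-3)] by metis
  then interpret detM_root \<kappa> w c z e1 e2 .
  show ?thesis
    using has_dim_gen_eigenspace zorder_detM unfolding algebraic_multiplicity_is_def by auto
qed

lemma eigenvalue_L_geometrically_simple:
  assumes "\<kappa> > 0" "w > 0" "\<bar>c\<bar> > 1" "eigenvalue_L \<kappa> w c z"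
  shows "geometrically_simple \<kappa> w c z"
proof -
  have "detM \<kappa> w c z = 0"
    using assms eigenvalue_L_iff_detM_zero[of c \<kappa> w z] by auto
  then obtain e1 e2 where "detM_root \<kappa> w c z e1 e2"
    using detM_root_exists[OF assms(1-3)] by metis
  then interpret detM_root \<kappa> w c z e1 e2 .
  show ?thesis
    unfolding geometrically_simple_def by (rule has_dim_eigenspace)
qed

theorem proposition3p1:
  fixes \<kappa> w c :: real
  assumes "\<kappa> > 0" and "w > 0" and "c \<noteq> 0"
  shows "spectrum_L \<kappa> w c = {z. detM \<kappa> w c z = 0}
    \<and> (\<forall>z. detM \<kappa> w c z = (of_real c)^4 * z^4
             + (of_real c)\<^sup>2 * (1 + of_real \<kappa>) * (1 + of_real w) * z\<^sup>2
             + 2 * of_real \<kappa> * of_real w * (1 - cosh (2 * z)))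
    \<and> (\<bar>c\<bar> > 1 \<longrightarrow>
        (\<forall>z\<in>spectrum_L \<kappa> w c. eigenvalue_L \<kappa> w c z)
      \<and> (\<forall>z. eigenvalue_L \<kappa> w c z \<longrightarrow>
            \<not> z islimpt spectrum_L \<kappa> w c
            \<and> (\<exists>n. algebraic_multiplicity_is \<kappa> w c z n \<and> int n = zorder (detM \<kappa> w c) z))
      \<and> (\<forall>z. eigenvalue_L \<kappa> w c z \<longrightarrow> geometrically_simple \<kappa> w c z)
      \<and> (\<forall>z\<in>spectrum_L \<kappa> w c. cnj z \<in> spectrum_L \<kappa> w c \<and> - z \<in> spectrum_L \<kappa> w c)
      \<and> (\<forall>z\<in>resolvent_set \<kappa> w c. \<forall>U\<in>Xsp.
           let d = detM \<kappa> w c z; c2 = (of_real c)\<^sup>2; k = of_real \<kappa>; w' = of_real w;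
               A = c2 * xi1 U + c2 * z * p1 U + Iz z (P2 U) 1 + k * Iz z (P2 U) (-1);
               B = c2 * xi2 U + c2 * z * p2 U + k * w' * Iz z (P1 U) 1 + w' * Iz z (P1 U) (-1);
               R = Res \<kappa> w c z U
           in p1 R = (c2 * z\<^sup>2 + w' * (1 + k)) / d * A + (exp z + k * exp (- z)) / d * B
            \<and> p2 R = w' * (k * exp z + exp (- z)) / d * A + (c2 * z\<^sup>2 + 1 + k) / d * B
            \<and> xi1 R = z * p1 R - p1 U
            \<and> xi2 R = z * p2 R - p2 U
            \<and> (\<forall>v\<in>{-1..1}. P1 R v = exp (z * of_real v) * p1 R + Iz z (P1 U) v)
            \<and> (\<forall>v\<in>{-1..1}. P2 R v = exp (z * of_real v) * p2 R + Iz z (P2 U) v)))"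
proof (intro conjI allI impI ballI)
  note spectrum = spectrum_L_eq_zeros_detM[OF assms(3)]
  show "spectrum_L \<kappa> w c = {z. detM \<kappa> w c z = 0}"
    by (rule spectrum)
  show "detM \<kappa> w c z = (of_real c)^4 * z^4 + (of_real c)\<^sup>2 * (1 + of_real \<kappa>) * (1 + of_real w) * z\<^sup>2
      + 2 * of_real \<kappa> * of_real w * (1 - cosh (2 * z))" for z
    by (rule detM_closed_form)
  show "eigenvalue_L \<kappa> w c z" if "z \<in> spectrum_L \<kappa> w c" for z
    using that eigenvalue_L_iff_detM_zero[OF assms(3)] unfolding spectrum by simp
  show "\<not> z islimpt spectrum_L \<kappa> w c" for z
    unfolding spectrum by (rule zeros_detM_isolated[OF assms])
  show "\<exists>n. algebraic_multiplicity_is \<kappa> w c z n \<and> int n = zorder (detM \<kappa> w c) z"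
    "geometrically_simple \<kappa> w c z" if "\<bar>c\<bar> > 1" "eigenvalue_L \<kappa> w c z" for z
    using algebraic_multiplicity_eq_zorder eigenvalue_L_geometrically_simple assms(1,2) that by blast+
  show "cnj z \<in> spectrum_L \<kappa> w c" "- z \<in> spectrum_L \<kappa> w c" if "z \<in> spectrum_L \<kappa> w c" for z
    using that unfolding spectrum by (simp_all add: detM_cnj detM_uminus)
qed (rule resolvent_formula[OF assms(3)])

end
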